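(* Let $\mathfrak m,\mathfrak n\in\mathbb R^{+}$ with $\mathfrak m<\mathfrak n$, $\Omega=[\mathfrak m,\mathfrak n]$, $\sigma>0$, and let $\Phi\colon\Omega\to\mathbb R$ be an increasing differentiable function with $\Phi'(\ell)\neq 0$ for all $\ell\in\Omega$. Let $0<\kappa<\mu\le 1$, $\varrho>0$, $h\in C(\Omega,\mathbb R)$ and $\alpha\in C([\mathfrak m-\sigma,\mathfrak m],\mathbb R)$. Then the linear problem $$ \begin{cases} {^{c}\mathbb{D}}_{\mathfrak m^{+}}^{\mu;\Phi}\mathfrak z(\ell)+\varrho\,{^{c}\mathbb{D}}_{\mathfrak m^{+}}^{\kappa;\Phi}\mathfrak z(\ell)=h(\ell), & \ell\in[\mathfrak m,\mathfrak n],\\ \mathfrak z(\ell)=\alpha(\ell), & \ell\in[\mathfrak m-\sigma,\mathfrak m], \end{cases} $$ has a unique solution, given explicitly by $$ \mathfrak z(\ell)=\begin{cases} \alpha(\mathfrak m)+\displaystyle\int_{\mathfrak m}^{\ell}\Phi'(\eta)(\Phi(\ell)-\Phi(\eta))^{\mu-1}\,\mathbb M_{\mu-\kappa,\mu}\bigl(-\varrho(\Phi(\ell)-\Phi(\eta))^{\mu-\kappa}\bigr)h(\eta)\,\mathrm d\eta, & \ell\in[\mathfrak m,\mathfrak n],\\ \alpha(\ell), & \ell\in[\mathfrak m-\sigma,\mathfrak m]. \end{cases} $$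
   Context: Mittag-Leffler functions: for $p,q>0$ and $\vartheta\in\mathbb R$, $\mathbb M_{p}(\vartheta)=\sum_{k\ge0}\frac{\vartheta^k}{\Gamma(pk+1)}$ and $\mathbb M_{p,q}(\vartheta)=\sum_{k\ge0}\frac{\vartheta^k}{\Gamma(pk+q)}$. The $\Phi$-Riemann–Liouville fractional integral of order $\gamma>0$ of an integrable $\mathfrak z\colon\Omega\to\mathbb R$ is $\mathbb I_{\mathfrak m^+}^{\gamma;\Phi}\mathfrak z(\ell)=\frac{1}{\Gamma(\gamma)}\int_{\mathfrak m}^{\ell}\Phi'(\eta)(\Phi(\ell)-\Phi(\eta))^{\gamma-1}\mathfrak z(\eta)\,\mathrm d\eta$. For $0<\gamma<1$, the $\Phi$-Caputo fractional derivative of order $\gamma$ of $\mathfrak z\in C^1(\Omega,\mathbb R)$ is ${^{c}\mathbb D}_{\mathfrak m^+}^{\gamma;\Phi}\mathfrak z(\ell)=\mathbb I_{\mathfrak m^+}^{1-\gamma;\Phi}\Bigl(\frac{\mathfrak z'(\cdot)}{\Phi'(\cdot)}\Bigr)(\ell)$, and for $\gamma=1$ it is $\frac{\mathfrak z'(\ell)}{\Phi'(\ell)}$.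
   Formalization: For $0<\gamma<1$ the $\Phi$-Caputo derivative is $1/\Phi'(\ell)$ times the derivative within $\Omega$ of $\mathbb I_{\mathfrak m^+}^{1-\gamma;\Phi}$ applied to $\mathfrak z-\mathfrak z(\mathfrak m)$, and solutions are functions continuous on $[\mathfrak m-\sigma,\mathfrak n]$ with both derivatives existing on $\Omega$, not $C^1$. The statement above fails without it. *)

theory Defs
  imports "HOL-Analysis.Analysis"
begin

definition ML1 :: "real \<Rightarrow> real \<Rightarrow> real" where
  "ML1 p x = (\<Sum>k. x ^ k / Gamma (p * real k + 1))"

definition ML2 :: "real \<Rightarrow> real \<Rightarrow> real \<Rightarrow> real" where
  "ML2 p q x = (\<Sum>k. x ^ k / Gamma (p * real k + q))"

text \<open>Phi-Riemann-Liouville fractional integral of order gamma with lower limit m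
  (Phi' is the derivative of Phi, passed explicitly).\<close>
definition RL_int ::
  "real \<Rightarrow> (real \<Rightarrow> real) \<Rightarrow> (real \<Rightarrow> real) \<Rightarrow> real \<Rightarrow> (real \<Rightarrow> real) \<Rightarrow> real \<Rightarrow> real" where
  "RL_int m \<Phi> \<Phi>' \<gamma> f l =
     (1 / Gamma \<gamma>) * (LINT \<eta>:{m..l}|lborel. \<Phi>' \<eta> * (\<Phi> l - \<Phi> \<eta>) powr (\<gamma> - 1) * f \<eta>)"

text \<open>Phi-Caputo derivative of order gamma in (0,1] on the interval [m,n].
  For gamma = 1 it is z'/Phi'. For 0 < gamma < 1 we use the standard form
  (1/Phi') d/dl I^{1-gamma}(z - z(m)), which coincides with I^{1-gamma}(z'/Phi')
  for z in C^1. Derivatives are taken within [m,n].\<close>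
definition caputo ::
  "real \<Rightarrow> real \<Rightarrow> (real \<Rightarrow> real) \<Rightarrow> (real \<Rightarrow> real) \<Rightarrow> real \<Rightarrow> (real \<Rightarrow> real) \<Rightarrow> real \<Rightarrow> real" where
  "caputo m n \<Phi> \<Phi>' \<gamma> z l =
     (if \<gamma> = 1 then vector_derivative z (at l within {m..n}) / \<Phi>' l
      else vector_derivative (\<lambda>t. RL_int m \<Phi> \<Phi>' (1 - \<gamma>) (\<lambda>\<eta>. z \<eta> - z m) t)
                (at l within {m..n}) / \<Phi>' l)"

definition caputo_exists ::
  "real \<Rightarrow> real \<Rightarrow> (real \<Rightarrow> real) \<Rightarrow> (real \<Rightarrow> real) \<Rightarrow> real \<Rightarrow> (real \<Rightarrow> real) \<Rightarrow> real \<Rightarrow> bool" where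
  "caputo_exists m n \<Phi> \<Phi>' \<gamma> z l =
     (if \<gamma> = 1 then z differentiable (at l within {m..n})
      else (\<lambda>t. RL_int m \<Phi> \<Phi>' (1 - \<gamma>) (\<lambda>\<eta>. z \<eta> - z m) t) differentiable (at l within {m..n}))"

definition is_solution ::
  "real \<Rightarrow> real \<Rightarrow> real \<Rightarrow> (real \<Rightarrow> real) \<Rightarrow> (real \<Rightarrow> real) \<Rightarrow> real \<Rightarrow> real \<Rightarrow> real
   \<Rightarrow> (real \<Rightarrow> real) \<Rightarrow> (real \<Rightarrow> real) \<Rightarrow> (real \<Rightarrow> real) \<Rightarrow> bool" where
  "is_solution m n \<sigma> \<Phi> \<Phi>' \<kappa> \<mu> \<rho> h \<alpha> z \<longleftrightarrow>
     continuous_on {m - \<sigma>..n} z \<and>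
     (\<forall>l\<in>{m - \<sigma>..m}. z l = \<alpha> l) \<and>
     (\<forall>l\<in>{m..n}. caputo_exists m n \<Phi> \<Phi>' \<mu> z l \<and> caputo_exists m n \<Phi> \<Phi>' \<kappa> z l \<and>
        caputo m n \<Phi> \<Phi>' \<mu> z l + \<rho> * caputo m n \<Phi> \<Phi>' \<kappa> z l = h l)"

end

theory Submission
  imports Defs
begin

text \<open>
  Substituting \<open>u = \<Phi> \<ell>\<close> turns the \<open>\<Phi>\<close>-Riemann-Liouville integrals into classical ones
  \<open>I\<^sup>\<gamma>\<close> with base point \<open>a = \<Phi> m\<close>, and the problem into finding \<open>Y\<close> (with \<open>z = \<alpha> m + Y \<circ> \<Phi>\<close>)
  such that \<open>I\<^bsup>1-\<mu>\<^esup> Y + \<rho> I\<^bsup>1-\<kappa>\<^esup> Y\<close> is a primitive of \<open>H = h \<circ> \<Phi>\<inverse>\<close>.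
  With \<open>\<delta> = \<mu> - \<kappa>\<close> the Neumann series \<open>Y = \<Sum>\<^sub>k (-\<rho>)\<^sup>k I\<^bsup>\<delta>k+\<mu>\<^esup> H\<close> solves this:
  by the semigroup law \<open>I\<^sup>p I\<^sup>q = I\<^bsup>p+q\<^esup>\<close> one gets \<open>I\<^bsup>1-\<kappa>\<^esup> Y = I\<^sup>1 G\<close> and
  \<open>I\<^bsup>1-\<mu>\<^esup> Y = I\<^sup>1 (H - \<rho> G)\<close> for \<open>G = \<Sum>\<^sub>k (-\<rho>)\<^sup>k I\<^bsup>\<delta>k+\<delta>\<^esup> H\<close>, and integrating the series
  termwise produces the Mittag-Leffler kernel of the explicit formula.
  The difference \<open>D\<close> of two solutions satisfies \<open>I\<^bsup>1-\<mu>\<^esup> D + \<rho> I\<^bsup>1-\<kappa>\<^esup> D = 0\<close>; applying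
  \<open>I\<^sup>\<mu>\<close> and differentiating gives \<open>D = -\<rho> I\<^sup>\<delta> D\<close>, and iterating this with the power rule
  bounds \<open>\<bar>D\<bar>\<close> by the terms \<open>M \<rho>\<^sup>k (u - a)\<^bsup>\<delta>k\<^esup> / \<Gamma>(\<delta>k + 1)\<close> of a convergent series.
\<close>

lemma Gamma_plus1_real: "0 < (g::real) \<Longrightarrow> Gamma (g + 1) = g * Gamma g"
  by (rule Gamma_plus1) (auto elim!: nonpos_Ints_cases)

lemma set_integrable_lborel_iff_absolutely_integrable:
  fixes f :: "real \<Rightarrow> real"
  assumes "set_borel_measurable lborel S f"
  shows "set_integrable lborel S f \<longleftrightarrow> f absolutely_integrable_on S"
  using assms unfolding set_integrable_def set_borel_measurable_def
  by (simp add: integrable_completion)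

lemma set_integral_lborel_of_has_integral_nonneg:
  fixes f :: "real \<Rightarrow> real"
  assumes "(f has_integral I) S" "\<And>s. s \<in> S \<Longrightarrow> 0 \<le> f s"
    and "set_borel_measurable lborel S f"
  shows "set_integrable lborel S f" "(LINT s:S|lborel. f s) = I"
proof -
  have "f absolutely_integrable_on S"
    using assms(1,2) by (intro nonnegative_absolutely_integrable_1) (auto simp: has_integral_integrable)
  then show integrable: "set_integrable lborel S f"
    using set_integrable_lborel_iff_absolutely_integrable[OF assms(3)] by simp
  show "(LINT s:S|lborel. f s) = I"
    using set_borel_integral_eq_integral(2)[OF integrable] assms(1) by (simp add: integral_unique)
qed

lemma set_borel_measurable_continuous_on_Icc:
  fixes f :: "real \<Rightarrow> real"
  shows "continuous_on {a..b} f \<Longrightarrow> set_borel_measurable lborel {a..b} f"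
  using set_measurable_continuous_on[of "{a..b}" f] by (simp add: set_borel_measurable_def)

lemma continuous_on_Icc_abs_bound:
  fixes f :: "real \<Rightarrow> real"
  assumes "continuous_on {a..b} f"
  obtains B where "0 \<le> B" "\<And>x. x \<in> {a..b} \<Longrightarrow> \<bar>f x\<bar> \<le> B"
proof -
  have "bounded (f ` {a..b})"
    by (intro compact_imp_bounded compact_continuous_image assms compact_Icc)
  then obtain B where "\<forall>x\<in>f ` {a..b}. norm x \<le> B"
    by (auto simp: bounded_iff)
  then show ?thesis
    using that[of "max B 0"] by force
qed

lemma set_integral_lborel_singleton: "(LINT s:{a}|lborel. (f s :: real)) = 0"
proof -
  have "(\<lambda>s. indicat_real {a} s *\<^sub>R f s) = (\<lambda>s. indicator {a} s * f a)"
    by (auto simp: indicator_def)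
  then show ?thesis unfolding set_lebesgue_integral_def by simp
qed

lemma set_integral_suminf:
  fixes f :: "nat \<Rightarrow> real \<Rightarrow> real"
  assumes integrable: "\<And>k. set_integrable lborel A (f k)"
    and summable_abs: "\<And>x. x \<in> A \<Longrightarrow> summable (\<lambda>k. \<bar>f k x\<bar>)"
    and summable_integrals: "summable (\<lambda>k. LINT x:A|lborel. \<bar>f k x\<bar>)"
  shows "set_integrable lborel A (\<lambda>x. \<Sum>k. f k x)"
    and "(\<lambda>k. LINT x:A|lborel. f k x) sums (LINT x:A|lborel. (\<Sum>k. f k x))"
proof -
  define g where "g = (\<lambda>k x. indicator A x *\<^sub>R f k x)"
  have g: "integrable lborel (g k)" for k
    using integrable unfolding set_integrable_def g_def .
  have AE: "AE x in lborel. summable (\<lambda>k. norm (g k x))"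
    using summable_abs by (intro AE_I2) (auto simp: g_def indicator_def)
  have summable: "summable (\<lambda>k. \<integral>x. norm (g k x) \<partial>lborel)"
    using summable_integrals by (simp add: g_def set_lebesgue_integral_def abs_mult)
  have sum_g: "(\<lambda>x. \<Sum>k. g k x) = (\<lambda>x. indicator A x *\<^sub>R (\<Sum>k. f k x))"
    by (auto simp: g_def indicator_def)
  show "set_integrable lborel A (\<lambda>x. \<Sum>k. f k x)"
    using integrable_suminf[of lborel g, OF g AE summable] unfolding sum_g set_integrable_def .
  show "(\<lambda>k. LINT x:A|lborel. f k x) sums (LINT x:A|lborel. (\<Sum>k. f k x))"
    using sums_integral[of lborel g, OF g AE summable]
    unfolding sum_g by (simp add: set_lebesgue_integral_def g_def)
qed

lemma has_integral_Beta_kernel: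
  fixes \<alpha> \<beta> t u :: real
  assumes "0 < \<alpha>" "0 < \<beta>" "t \<le> u"
  shows "((\<lambda>s. (u - s) powr (\<alpha> - 1) * (s - t) powr (\<beta> - 1)) has_integral
           Beta \<alpha> \<beta> * (u - t) powr (\<alpha> + \<beta> - 1)) {t..u}"
proof (cases "t = u")
  case True
  then show ?thesis using has_integral_refl(2)[of _ u] by simp
next
  case False
  then have tu: "t < u" using assms(3) by simp
  define g where "g = (\<lambda>x::real. x powr (\<beta> - 1) * (1 - x) powr (\<alpha> - 1))"
  have Beta: "(g has_integral Beta \<beta> \<alpha>) (cbox 0 1)"
    using has_integral_Beta_real[OF assms(2,1)] by (simp add: g_def)
  define c where "c = 1 / (u - t)"
  have c: "c > 0" using tu by (simp add: c_def)
  have "((\<lambda>x. g (c *\<^sub>R x + - c * t)) has_integral Beta \<beta> \<alpha> /\<^sub>R c ^ DIM(real))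
           (cbox ((0 - - c * t) /\<^sub>R c) ((1 - - c * t) /\<^sub>R c))"
    by (rule has_integral_affinity'[OF Beta c])
  also have "(0 - - c * t) /\<^sub>R c = t"
    using tu by (simp add: c_def)
  also have "(1 - - c * t) /\<^sub>R c = u"
    using tu by (simp add: c_def field_simps)
  finally have scaled: "((\<lambda>x. g (c * x - c * t)) has_integral Beta \<alpha> \<beta> * (u - t)) {t..u}"
    using tu by (simp add: c_def Beta_commute mult.commute)
  have kernel: "(u - t) powr (\<alpha> + \<beta> - 2) * g (c * s - c * t)
      = (u - s) powr (\<alpha> - 1) * (s - t) powr (\<beta> - 1)" if "s \<in> {t..u}" for s
  proof -
    have e1: "c * s - c * t = (s - t) / (u - t)"
      by (simp add: c_def diff_divide_distrib)
    have e2: "1 - (s - t) / (u - t) = (u - s) / (u - t)"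
      using tu by (simp add: field_simps)
    have "g (c * s - c * t)
        = (s - t) powr (\<beta> - 1) / (u - t) powr (\<beta> - 1) * ((u - s) powr (\<alpha> - 1) / (u - t) powr (\<alpha> - 1))"
      unfolding g_def e1 e2 using that tu by (simp add: powr_divide)
    moreover have "(u - t) powr (\<alpha> + \<beta> - 2) = (u - t) powr (\<beta> - 1) * (u - t) powr (\<alpha> - 1)"
      by (simp add: powr_add[symmetric] add_ac)
    moreover have "(u - t) powr (\<beta> - 1) > 0" "(u - t) powr (\<alpha> - 1) > 0" using tu by auto
    ultimately show ?thesis by (simp add: field_simps)
  qed
  have "(u - t) powr (\<alpha> + \<beta> - 1) = (u - t) powr ((\<alpha> + \<beta> - 2) + 1)"
    by simp
  then have rescale: "(u - t) powr (\<alpha> + \<beta> - 2) * (Beta \<alpha> \<beta> * (u - t)) = Beta \<alpha> \<beta> * (u - t) powr (\<alpha> + \<beta> - 1)"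
    using tu by (simp only: powr_add) simp
  have "((\<lambda>s. (u - t) powr (\<alpha> + \<beta> - 2) * g (c * s - c * t)) has_integral
          Beta \<alpha> \<beta> * (u - t) powr (\<alpha> + \<beta> - 1)) {t..u}"
    using has_integral_mult_right[OF scaled, of "(u - t) powr (\<alpha> + \<beta> - 2)"] unfolding rescale .
  then show ?thesis
    by (rule has_integral_eq[OF kernel, rotated])
qed

lemma has_integral_rl_kernel:
  fixes \<gamma> a u :: real
  assumes "0 < \<gamma>" "a \<le> u"
  shows "((\<lambda>s. (u - s) powr (\<gamma> - 1)) has_integral (u - a) powr \<gamma> / \<gamma>) {a..u}"
proof -
  have "Gamma \<gamma> \<noteq> 0"
    using Gamma_real_pos[OF assms(1)] by simp
  then have "Beta \<gamma> 1 = 1 / \<gamma>"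
    using assms(1) by (simp add: Beta_def Gamma_plus1_real)
  then have "((\<lambda>s. (u - s) powr (\<gamma> - 1) * (s - a) powr (1 - 1)) has_integral (u - a) powr \<gamma> / \<gamma>) {a..u}"
    using has_integral_Beta_kernel[OF assms(1) zero_less_one assms(2)] by simp
  then show ?thesis
    by (rule has_integral_spike_finite[of "{a}", rotated 2]) auto
qed

lemma set_integral_Beta_kernel:
  fixes \<alpha> \<beta> t u :: real
  assumes "0 < \<alpha>" "0 < \<beta>" "t \<le> u"
  shows "set_integrable lborel {t..u} (\<lambda>s. (u - s) powr (\<alpha> - 1) * (s - t) powr (\<beta> - 1))"
    and "(LINT s:{t..u}|lborel. (u - s) powr (\<alpha> - 1) * (s - t) powr (\<beta> - 1))
           = Beta \<alpha> \<beta> * (u - t) powr (\<alpha> + \<beta> - 1)"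
  by (rule set_integral_lborel_of_has_integral_nonneg[OF has_integral_Beta_kernel[OF assms]],
      simp, simp add: set_borel_measurable_def, measurable)+

lemma set_integral_rl_kernel:
  fixes \<gamma> a u :: real
  assumes "0 < \<gamma>" "a \<le> u"
  shows "set_integrable lborel {a..u} (\<lambda>s. (u - s) powr (\<gamma> - 1))"
    and "(LINT s:{a..u}|lborel. (u - s) powr (\<gamma> - 1)) = (u - a) powr \<gamma> / \<gamma>"
  by (rule set_integral_lborel_of_has_integral_nonneg[OF has_integral_rl_kernel[OF assms]],
      simp, simp add: set_borel_measurable_def, measurable)+

section \<open>Riemann-Liouville integrals\<close>

definition rl_integral :: "real \<Rightarrow> real \<Rightarrow> (real \<Rightarrow> real) \<Rightarrow> real \<Rightarrow> real" where
  "rl_integral a \<gamma> f u = (1 / Gamma \<gamma>) * (LINT s:{a..u}|lborel. (u - s) powr (\<gamma> - 1) * f s)"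

lemma rl_integral_cong:
  "(\<And>s. s \<in> {a..u} \<Longrightarrow> f s = g s) \<Longrightarrow> rl_integral a \<gamma> f u = rl_integral a \<gamma> g u"
  unfolding rl_integral_def by (intro arg_cong2[where f = "(*)"] refl set_lebesgue_integral_cong) auto

lemma rl_integral_base [simp]: "rl_integral a \<gamma> f a = 0"
  by (simp add: rl_integral_def set_integral_lborel_singleton)

lemma rl_integral_cmult: "rl_integral a \<gamma> (\<lambda>s. c * f s) u = c * rl_integral a \<gamma> f u"
proof -
  have "(\<lambda>s. (u - s) powr (\<gamma> - 1) * (c * f s)) = (\<lambda>s. c * ((u - s) powr (\<gamma> - 1) * f s))"
    by (simp add: mult_ac)
  then show ?thesis unfolding rl_integral_def by simp
qed

lemma set_integrable_rl_kernel_times: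
  fixes f :: "real \<Rightarrow> real"
  assumes "0 < \<gamma>" "continuous_on {a..u} f"
  shows "set_integrable lborel {a..u} (\<lambda>s. (u - s) powr (\<gamma> - 1) * f s)"
proof (cases "a \<le> u")
  case True
  obtain B where B: "\<And>s. s \<in> {a..u} \<Longrightarrow> \<bar>f s\<bar> \<le> B"
    using continuous_on_Icc_abs_bound[OF assms(2)] by metis
  show ?thesis
  proof (rule set_integrable_bound)
    show "set_integrable lborel {a..u} (\<lambda>s. B * (u - s) powr (\<gamma> - 1))"
      using set_integral_rl_kernel(1)[OF assms(1) True] by simp
    have "(\<lambda>s. (u - s) powr (\<gamma> - 1) * (indicator {a..u} s *\<^sub>R f s)) \<in> borel_measurable lborel"
      using set_borel_measurable_continuous_on_Icc[OF assms(2)] unfolding set_borel_measurable_def by measurable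
    then show "set_borel_measurable lborel {a..u} (\<lambda>s. (u - s) powr (\<gamma> - 1) * f s)"
      unfolding set_borel_measurable_def by (simp add: ac_simps)
    show "AE s in lborel. s \<in> {a..u} \<longrightarrow> norm ((u - s) powr (\<gamma> - 1) * f s) \<le> norm (B * (u - s) powr (\<gamma> - 1))"
    proof (intro AE_I2 impI)
      fix s assume s: "s \<in> {a..u}"
      have "(u - s) powr (\<gamma> - 1) * \<bar>f s\<bar> \<le> (u - s) powr (\<gamma> - 1) * \<bar>B\<bar>"
        using B[OF s] by (intro mult_left_mono) auto
      then show "norm ((u - s) powr (\<gamma> - 1) * f s) \<le> norm (B * (u - s) powr (\<gamma> - 1))"
        by (simp add: abs_mult mult.commute)
    qed
  qed
qed (simp add: set_integrable_def)

lemma rl_integral_linear: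
  fixes f g :: "real \<Rightarrow> real"
  assumes "0 < \<gamma>" "continuous_on {a..u} f" "continuous_on {a..u} g"
  shows "rl_integral a \<gamma> (\<lambda>s. f s + c * g s) u = rl_integral a \<gamma> f u + c * rl_integral a \<gamma> g u"
proof -
  note integrable = set_integrable_rl_kernel_times[OF assms(1,2)]
    set_integrable_mult_right[OF set_integrable_rl_kernel_times[OF assms(1,3)], of c]
  have "(LINT s:{a..u}|lborel. (u - s) powr (\<gamma> - 1) * (f s + c * g s))
      = (LINT s:{a..u}|lborel. (u - s) powr (\<gamma> - 1) * f s + c * ((u - s) powr (\<gamma> - 1) * g s))"
    by (simp add: algebra_simps)
  also have "\<dots> = (LINT s:{a..u}|lborel. (u - s) powr (\<gamma> - 1) * f s)
      + c * (LINT s:{a..u}|lborel. (u - s) powr (\<gamma> - 1) * g s)"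
    using set_integral_add(2)[OF integrable] by simp
  finally show ?thesis unfolding rl_integral_def by (simp add: algebra_simps)
qed

lemma abs_rl_integral_le_rl_integral:
  fixes f g :: "real \<Rightarrow> real"
  assumes "0 < \<gamma>" "continuous_on {a..u} f" "set_integrable lborel {a..u} (\<lambda>s. (u - s) powr (\<gamma> - 1) * g s)"
    and "\<And>s. s \<in> {a..u} \<Longrightarrow> \<bar>f s\<bar> \<le> g s"
  shows "\<bar>rl_integral a \<gamma> f u\<bar> \<le> rl_integral a \<gamma> g u"
proof -
  have "\<bar>LINT s:{a..u}|lborel. (u - s) powr (\<gamma> - 1) * f s\<bar> \<le> (LINT s:{a..u}|lborel. (u - s) powr (\<gamma> - 1) * g s)"
    unfolding set_lebesgue_integral_def
  proof (rule integral_abs_bound_integral)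
    show "integrable lborel (\<lambda>s. indicat_real {a..u} s *\<^sub>R ((u - s) powr (\<gamma> - 1) * f s))"
      using set_integrable_rl_kernel_times[OF assms(1,2)] by (simp add: set_integrable_def)
    show "integrable lborel (\<lambda>s. indicat_real {a..u} s *\<^sub>R ((u - s) powr (\<gamma> - 1) * g s))"
      using assms(3) by (simp add: set_integrable_def)
    fix s
    show "\<bar>indicat_real {a..u} s *\<^sub>R ((u - s) powr (\<gamma> - 1) * f s)\<bar>
        \<le> indicat_real {a..u} s *\<^sub>R ((u - s) powr (\<gamma> - 1) * g s)"
      using assms(4)[of s] by (auto simp: indicator_def abs_mult intro: mult_left_mono)
  qed
  then show ?thesis
    using Gamma_real_pos[OF assms(1)] by (simp add: rl_integral_def abs_mult divide_right_mono)
qed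

lemma rl_integral_const:
  assumes "0 < \<gamma>" "a \<le> u"
  shows "rl_integral a \<gamma> (\<lambda>_. c) u = c * (u - a) powr \<gamma> / Gamma (\<gamma> + 1)"
proof -
  have "(LINT s:{a..u}|lborel. (u - s) powr (\<gamma> - 1) * c) = c * ((u - a) powr \<gamma> / \<gamma>)"
    using set_integral_rl_kernel(2)[OF assms] by (simp add: mult.commute)
  then show ?thesis
    using Gamma_plus1_real[OF assms(1)] unfolding rl_integral_def by simp
qed

lemma abs_rl_integral_le:
  fixes f :: "real \<Rightarrow> real"
  assumes "0 < \<gamma>" "a \<le> u" "continuous_on {a..u} f" "\<And>s. s \<in> {a..u} \<Longrightarrow> \<bar>f s\<bar> \<le> B"
  shows "\<bar>rl_integral a \<gamma> f u\<bar> \<le> B * (u - a) powr \<gamma> / Gamma (\<gamma> + 1)"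
proof -
  have "\<bar>rl_integral a \<gamma> f u\<bar> \<le> rl_integral a \<gamma> (\<lambda>_. B) u"
    by (rule abs_rl_integral_le_rl_integral[OF assms(1,3) set_integrable_rl_kernel_times[OF assms(1)] assms(4)])
      simp_all
  then show ?thesis
    using rl_integral_const[OF assms(1,2)] by simp
qed

lemma abs_rl_integral_le_Icc:
  fixes f :: "real \<Rightarrow> real"
  assumes "0 < \<gamma>" "continuous_on {a..b} f" "\<And>s. s \<in> {a..b} \<Longrightarrow> \<bar>f s\<bar> \<le> B" "u \<in> {a..b}"
  shows "\<bar>rl_integral a \<gamma> f u\<bar> \<le> B * (b - a) powr \<gamma> / Gamma (\<gamma> + 1)"
proof -
  have "\<bar>rl_integral a \<gamma> f u\<bar> \<le> B * (u - a) powr \<gamma> / Gamma (\<gamma> + 1)"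
    using assms by (intro abs_rl_integral_le continuous_on_subset[OF assms(2)]) auto
  also have "\<dots> \<le> B * (b - a) powr \<gamma> / Gamma (\<gamma> + 1)"
    using assms(1,4) assms(3)[of u] Gamma_real_pos[of "\<gamma> + 1"]
    by (intro divide_right_mono mult_left_mono powr_mono2) auto
  finally show ?thesis .
qed

lemma rl_integral_power:
  assumes "0 < \<gamma>" "-1 < \<beta>" "a \<le> u"
  shows "rl_integral a \<gamma> (\<lambda>s. (s - a) powr \<beta>) u = Gamma (\<beta> + 1) / Gamma (\<beta> + \<gamma> + 1) * (u - a) powr (\<beta> + \<gamma>)"
proof -
  have "Gamma \<gamma> \<noteq> 0"
    using Gamma_real_pos[OF assms(1)] by simp
  then show ?thesis
    using set_integral_Beta_kernel(2)[OF assms(1) _ assms(3), of "\<beta> + 1"] assms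
    by (simp add: rl_integral_def Beta_def algebra_simps)
qed

lemma rl_integral_one:
  fixes f :: "real \<Rightarrow> real"
  assumes "continuous_on {a..u} f"
  shows "rl_integral a 1 f u = integral {a..u} f"
proof -
  have "rl_integral a 1 f u = integral {a..u} (\<lambda>s. (u - s) powr (1 - 1) * f s)"
    using set_borel_integral_eq_integral(2)[OF set_integrable_rl_kernel_times[OF zero_less_one assms]]
    unfolding rl_integral_def by simp
  also have "\<dots> = integral {a..u} f"
    by (rule integral_spike[of "{u}"]) auto
  finally show ?thesis .
qed

lemma has_vector_derivative_rl_integral_one:
  fixes f :: "real \<Rightarrow> real"
  assumes "continuous_on {a..b} f" "u \<in> {a..b}"
  shows "(rl_integral a 1 f has_vector_derivative f u) (at u within {a..b})"
proof (rule has_vector_derivative_transform_within[OF integral_has_vector_derivative[OF assms] zero_less_one assms(2)])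
  fix v assume "v \<in> {a..b}"
  then show "integral {a..v} f = rl_integral a 1 f v"
    by (intro rl_integral_one[symmetric] continuous_on_subset[OF assms(1)]) auto
qed

lemma rl_integral_one_eq_zero_imp_eq_zero:
  fixes F :: "real \<Rightarrow> real"
  assumes "a < b" "continuous_on {a..b} F" "\<And>v. v \<in> {a..b} \<Longrightarrow> rl_integral a 1 F v = 0" "u \<in> {a..b}"
  shows "F u = 0"
proof -
  have "((\<lambda>v. 0) has_vector_derivative F u) (at u within {a..b})"
    by (rule has_vector_derivative_transform_within[OF has_vector_derivative_rl_integral_one[OF assms(2,4)]
          zero_less_one assms(4)]) (use assms(3) in auto)
  moreover have "((\<lambda>v. 0) has_vector_derivative 0) (at u within {a..b})"
    by (rule has_vector_derivative_const)
  ultimately show ?thesis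
    using vector_derivative_within_closed_interval[OF assms(1,4)] by metis
qed

lemma rl_integral_rescaled:
  fixes f :: "real \<Rightarrow> real"
  assumes "a \<le> u"
  shows "(LINT s:{a..u}|lborel. (u - s) powr (\<gamma> - 1) * f s) =
         (u - a) powr \<gamma> * (LINT x:{0..1}|lborel. (1 - x) powr (\<gamma> - 1) * f (a + (u - a) * x))"
proof (cases "a = u")
  case True
  then show ?thesis by (simp add: set_integral_lborel_singleton)
next
  case False
  then have au: "a < u" using assms by simp
  have indicator: "indicator {a..u} (a + (u - a) * x) = (indicator {0..1} x :: real)" for x
  proof -
    have "a \<le> a + (u - a) * x \<longleftrightarrow> 0 \<le> x" using au by (simp add: zero_le_mult_iff)
    moreover have "a + (u - a) * x \<le> u \<longleftrightarrow> (u - a) * x \<le> (u - a) * 1" by (simp add: algebra_simps)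
    ultimately show ?thesis using au by (simp add: indicator_def mult_le_cancel_left)
  qed
  have "(LINT s:{a..u}|lborel. (u - s) powr (\<gamma> - 1) * f s) = \<bar>u - a\<bar> *\<^sub>R (LBINT x.
      indicator {a..u} (a + (u - a) * x) *\<^sub>R ((u - (a + (u - a) * x)) powr (\<gamma> - 1) * f (a + (u - a) * x)))"
    unfolding set_lebesgue_integral_def using au by (intro lborel_integral_real_affine) simp
  also have "(\<lambda>x. indicator {a..u} (a + (u - a) * x) *\<^sub>R ((u - (a + (u - a) * x)) powr (\<gamma> - 1) * f (a + (u - a) * x)))
      = (\<lambda>x. (u - a) powr (\<gamma> - 1) * (indicator {0..1} x *\<^sub>R ((1 - x) powr (\<gamma> - 1) * f (a + (u - a) * x))))"
  proof (rule ext)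
    fix x
    have "u - (a + (u - a) * x) = (u - a) * (1 - x)"
      by (simp add: algebra_simps)
    then show "indicator {a..u} (a + (u - a) * x) *\<^sub>R ((u - (a + (u - a) * x)) powr (\<gamma> - 1) * f (a + (u - a) * x))
      = (u - a) powr (\<gamma> - 1) * (indicator {0..1} x *\<^sub>R ((1 - x) powr (\<gamma> - 1) * f (a + (u - a) * x)))"
      unfolding indicator by (simp add: powr_mult)
  qed
  also have "\<bar>u - a\<bar> *\<^sub>R (LBINT x. (u - a) powr (\<gamma> - 1) * (indicator {0..1} x *\<^sub>R ((1 - x) powr (\<gamma> - 1) * f (a + (u - a) * x))))
      = (u - a) * (u - a) powr (\<gamma> - 1) * (LINT x:{0..1}|lborel. (1 - x) powr (\<gamma> - 1) * f (a + (u - a) * x))"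
    using au unfolding set_lebesgue_integral_def by (simp add: integral_mult_right_zero)
  also have "(u - a) * (u - a) powr (\<gamma> - 1) = (u - a) powr \<gamma>"
    using au by (simp add: powr_mult_base)
  finally show ?thesis .
qed

lemma continuous_on_rescaled_kernel_integral:
  fixes f :: "real \<Rightarrow> real"
  assumes "0 < \<gamma>" "continuous_on UNIV f"
  shows "continuous_on {a..b} (\<lambda>u. LINT x:{0..1}|lborel. (1 - x) powr (\<gamma> - 1) * f (a + (u - a) * x))"
proof (rule continuous_on_sequentiallyI)
  fix us :: "nat \<Rightarrow> real" and u assume us: "\<forall>n. us n \<in> {a..b}" "us \<longlonglongrightarrow> u"
  obtain B where B: "\<And>x. x \<in> {a..b} \<Longrightarrow> \<bar>f x\<bar> \<le> B"
    using continuous_on_Icc_abs_bound[OF continuous_on_subset[OF assms(2)]] by blast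
  have measurable: "(\<lambda>x. indicat_real {0..1} x *\<^sub>R ((1 - x) powr (\<gamma> - 1) * f (a + (v - a) * x)))
      \<in> borel_measurable lborel" for v
  proof -
    have "continuous_on UNIV (\<lambda>x. f (a + (v - a) * x))"
      by (intro continuous_on_compose2[OF assms(2)] continuous_intros) auto
    then have [measurable]: "(\<lambda>x. f (a + (v - a) * x)) \<in> borel_measurable lborel"
      using borel_measurable_continuous_onI by simp
    show ?thesis by measurable
  qed
  show "(\<lambda>n. LINT x:{0..1}|lborel. (1 - x) powr (\<gamma> - 1) * f (a + (us n - a) * x))
      \<longlonglongrightarrow> (LINT x:{0..1}|lborel. (1 - x) powr (\<gamma> - 1) * f (a + (u - a) * x))"
    unfolding set_lebesgue_integral_def
  proof (rule integral_dominated_convergence[OF measurable measurable])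
    show "integrable lborel (\<lambda>x. indicat_real {0..1} x *\<^sub>R (B * (1 - x) powr (\<gamma> - 1)))"
      using set_integrable_mult_right[OF set_integral_rl_kernel(1)[OF assms(1), of 0 1], of B]
      unfolding set_integrable_def by simp
    show "AE x in lborel. (\<lambda>n. indicat_real {0..1} x *\<^sub>R ((1 - x) powr (\<gamma> - 1) * f (a + (us n - a) * x)))
        \<longlonglongrightarrow> indicat_real {0..1} x *\<^sub>R ((1 - x) powr (\<gamma> - 1) * f (a + (u - a) * x))"
    proof (intro AE_I2 tendsto_scaleR tendsto_mult tendsto_const)
      fix x
      have "(\<lambda>n. a + (us n - a) * x) \<longlonglongrightarrow> a + (u - a) * x"
        by (intro tendsto_intros us(2))
      moreover have "isCont f (a + (u - a) * x)"
        using assms(2) by (simp add: continuous_on_eq_continuous_at)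
      ultimately show "(\<lambda>n. f (a + (us n - a) * x)) \<longlonglongrightarrow> f (a + (u - a) * x)"
        using isCont_tendsto_compose by blast
    qed
    show "AE x in lborel. norm (indicat_real {0..1} x *\<^sub>R ((1 - x) powr (\<gamma> - 1) * f (a + (us n - a) * x)))
        \<le> indicat_real {0..1} x *\<^sub>R (B * (1 - x) powr (\<gamma> - 1))" for n
    proof (intro AE_I2)
      fix x
      show "norm (indicat_real {0..1} x *\<^sub>R ((1 - x) powr (\<gamma> - 1) * f (a + (us n - a) * x)))
          \<le> indicat_real {0..1} x *\<^sub>R (B * (1 - x) powr (\<gamma> - 1))"
      proof (cases "x \<in> {0..1}")
        case True
        have "us n \<in> {a..b}" using us(1) by auto
        moreover have "(us n - a) * x \<le> (us n - a) * 1" if "a \<le> us n"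
          using True that by (intro mult_left_mono) auto
        ultimately have "\<bar>f (a + (us n - a) * x)\<bar> \<le> B"
          using True by (intro B) auto
        then show ?thesis
          using True mult_left_mono[of "\<bar>f (a + (us n - a) * x)\<bar>" B "(1 - x) powr (\<gamma> - 1)"]
          by (simp add: abs_mult mult.commute)
      qed simp
    qed
  qed
qed

lemma continuous_on_rl_integral:
  fixes f :: "real \<Rightarrow> real"
  assumes "0 < \<gamma>" "continuous_on {a..b} f"
  shows "continuous_on {a..b} (rl_integral a \<gamma> f)"
proof -
  define g where "g = (\<lambda>x. f (clamp a b x))"
  have "continuous_on UNIV g"
    using clamp_continuous_on[of a b f] assms(2) by (simp add: g_def)
  then have "continuous_on {a..b}
      (\<lambda>u. 1 / Gamma \<gamma> * ((u - a) powr \<gamma> * (LINT x:{0..1}|lborel. (1 - x) powr (\<gamma> - 1) * g (a + (u - a) * x))))"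
    using assms(1) by (intro continuous_intros continuous_on_rescaled_kernel_integral continuous_on_powr') auto
  moreover have "rl_integral a \<gamma> f u = 1 / Gamma \<gamma> *
      ((u - a) powr \<gamma> * (LINT x:{0..1}|lborel. (1 - x) powr (\<gamma> - 1) * g (a + (u - a) * x)))"
    if "u \<in> {a..b}" for u
  proof -
    have "rl_integral a \<gamma> f u = rl_integral a \<gamma> g u"
      using that by (intro rl_integral_cong) (simp add: g_def)
    then show ?thesis
      using that rl_integral_rescaled[of a u \<gamma> g] by (simp add: rl_integral_def)
  qed
  ultimately show ?thesis
    by (metis (no_types, lifting) continuous_on_eq)
qed

lemma integrable_rl_semigroup_integrand:
  fixes f :: "real \<Rightarrow> real"
  assumes "0 < \<alpha>" "0 < \<beta>" "continuous_on UNIV f" "a \<le> u"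
  defines "G \<equiv> \<lambda>s t. if a \<le> t \<and> t \<le> s \<and> s \<le> u then (u - s) powr (\<alpha> - 1) * ((s - t) powr (\<beta> - 1) * f t) else 0"
  shows "integrable (lborel \<Otimes>\<^sub>M lborel) (case_prod G)"
proof (rule lborel_pair.Fubini_integrable)
  have [measurable]: "f \<in> borel_measurable borel"
    using assms(3) by (rule borel_measurable_continuous_onI)
  show measurable: "case_prod G \<in> borel_measurable (lborel \<Otimes>\<^sub>M lborel)"
    unfolding G_def by measurable
  have slice: "(\<lambda>t. G s t) = (\<lambda>t. indicator {a..u} s * (u - s) powr (\<alpha> - 1) *
      (indicator {a..s} t *\<^sub>R ((s - t) powr (\<beta> - 1) * f t)))" for s
    by (rule ext) (auto simp: G_def indicator_def)
  show "AE s in lborel. integrable lborel (\<lambda>t. case_prod G (s, t))"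
    using set_integrable_rl_kernel_times[OF assms(2) continuous_on_subset[OF assms(3)], of a]
    unfolding slice set_integrable_def by simp
  obtain M where M: "\<And>x. x \<in> {a..u} \<Longrightarrow> \<bar>f x\<bar> \<le> M"
    using continuous_on_Icc_abs_bound[OF continuous_on_subset[OF assms(3)]] by blast
  define C where "C = Gamma \<beta> * (M * (u - a) powr \<beta> / Gamma (\<beta> + 1))"
  have C: "C \<ge> 0"
    using M[of a] assms by (auto simp: C_def intro!: divide_nonneg_pos)
  have slice_norm: "(\<integral>t. \<bar>G s t\<bar> \<partial>lborel) = indicator {a..u} s * (u - s) powr (\<alpha> - 1) *
      (Gamma \<beta> * rl_integral a \<beta> (\<lambda>t. \<bar>f t\<bar>) s)" for s
  proof -
    have "(\<lambda>t. \<bar>G s t\<bar>) = (\<lambda>t. indicator {a..u} s * (u - s) powr (\<alpha> - 1) *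
        (indicator {a..s} t *\<^sub>R ((s - t) powr (\<beta> - 1) * \<bar>f t\<bar>)))"
      by (rule ext) (auto simp: G_def indicator_def abs_mult)
    then show ?thesis
      using Gamma_real_pos[OF assms(2)] by (simp add: rl_integral_def set_lebesgue_integral_def)
  qed
  show "integrable lborel (\<lambda>s. \<integral>t. norm (case_prod G (s, t)) \<partial>lborel)"
  proof (rule Bochner_Integration.integrable_bound)
    show "integrable lborel (\<lambda>s. indicator {a..u} s *\<^sub>R (C * (u - s) powr (\<alpha> - 1)))"
      using set_integrable_mult_right[OF set_integral_rl_kernel(1)[OF assms(1,4)], of C]
      by (simp add: set_integrable_def)
    show "(\<lambda>s. \<integral>t. norm (case_prod G (s, t)) \<partial>lborel) \<in> borel_measurable lborel"
    proof -
      have "(\<lambda>(s, t). norm (G s t)) \<in> borel_measurable (lborel \<Otimes>\<^sub>M lborel)"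
        using measurable by measurable
      from lborel.borel_measurable_lebesgue_integral[OF this] show ?thesis by simp
    qed
    show "AE s in lborel. norm (\<integral>t. norm (case_prod G (s, t)) \<partial>lborel)
        \<le> norm (indicator {a..u} s *\<^sub>R (C * (u - s) powr (\<alpha> - 1)))"
    proof (intro AE_I2)
      fix s
      have "(\<integral>t. \<bar>G s t\<bar> \<partial>lborel) \<le> indicator {a..u} s * (C * (u - s) powr (\<alpha> - 1))"
      proof (cases "s \<in> {a..u}")
        case True
        have "\<bar>rl_integral a \<beta> (\<lambda>t. \<bar>f t\<bar>) s\<bar> \<le> M * (u - a) powr \<beta> / Gamma (\<beta> + 1)"
          using True M assms(2)
          by (intro abs_rl_integral_le_Icc continuous_intros continuous_on_subset[OF assms(3)]) auto
        then have "Gamma \<beta> * rl_integral a \<beta> (\<lambda>t. \<bar>f t\<bar>) s \<le> C"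
          unfolding C_def using Gamma_real_pos[OF assms(2)] by (intro mult_left_mono) auto
        then have "(u - s) powr (\<alpha> - 1) * (Gamma \<beta> * rl_integral a \<beta> (\<lambda>t. \<bar>f t\<bar>) s)
            \<le> (u - s) powr (\<alpha> - 1) * C"
          by (intro mult_left_mono) auto
        then show ?thesis
          using True by (simp add: slice_norm mult.commute)
      qed (simp add: slice_norm)
      then show "norm (\<integral>t. norm (case_prod G (s, t)) \<partial>lborel) \<le> norm (indicator {a..u} s *\<^sub>R (C * (u - s) powr (\<alpha> - 1)))"
        using C by (simp add: integral_nonneg_AE abs_mult)
    qed
  qed
qed

lemma rl_integral_semigroup_UNIV:
  fixes f :: "real \<Rightarrow> real"
  assumes "0 < \<alpha>" "0 < \<beta>" "continuous_on UNIV f" "a \<le> u"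
  shows "rl_integral a \<alpha> (rl_integral a \<beta> f) u = rl_integral a (\<alpha> + \<beta>) f u"
proof -
  define G where "G = (\<lambda>s t. if a \<le> t \<and> t \<le> s \<and> s \<le> u then (u - s) powr (\<alpha> - 1) * ((s - t) powr (\<beta> - 1) * f t) else 0)"
  have Gamma: "Gamma \<alpha> > 0" "Gamma \<beta> > 0" "Gamma (\<alpha> + \<beta>) > 0"
    using assms by auto
  have "(\<integral>s. (\<integral>t. G s t \<partial>lborel) \<partial>lborel) = (\<integral>t. (\<integral>s. G s t \<partial>lborel) \<partial>lborel)"
    using lborel_pair.Fubini_integral[OF integrable_rl_semigroup_integrand[OF assms]]
    unfolding G_def by simp
  moreover have "(\<integral>s. (\<integral>t. G s t \<partial>lborel) \<partial>lborel) = Gamma \<beta> * Gamma \<alpha> * rl_integral a \<alpha> (rl_integral a \<beta> f) u"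
  proof -
    have "(\<lambda>t. G s t) = (\<lambda>t. indicator {a..u} s * (u - s) powr (\<alpha> - 1) *
        (indicator {a..s} t *\<^sub>R ((s - t) powr (\<beta> - 1) * f t)))" for s
      by (rule ext) (auto simp: G_def indicator_def)
    then have "(\<integral>t. G s t \<partial>lborel) = Gamma \<beta> * (indicator {a..u} s *\<^sub>R ((u - s) powr (\<alpha> - 1) * rl_integral a \<beta> f s))" for s
      using Gamma by (simp add: rl_integral_def set_lebesgue_integral_def)
    then show ?thesis
      using Gamma by (simp add: rl_integral_def set_lebesgue_integral_def)
  qed
  moreover have "(\<integral>t. (\<integral>s. G s t \<partial>lborel) \<partial>lborel) = Beta \<alpha> \<beta> * Gamma (\<alpha> + \<beta>) * rl_integral a (\<alpha> + \<beta>) f u"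
  proof -
    have "(\<lambda>s. G s t) = (\<lambda>s. indicator {a..u} t * f t *
        (indicator {t..u} s *\<^sub>R ((u - s) powr (\<alpha> - 1) * (s - t) powr (\<beta> - 1))))" for t
      by (rule ext) (auto simp: G_def indicator_def)
    then have "(\<integral>s. G s t \<partial>lborel) = Beta \<alpha> \<beta> * (indicator {a..u} t *\<^sub>R ((u - t) powr (\<alpha> + \<beta> - 1) * f t))" for t
      using set_integral_Beta_kernel(2)[OF assms(1,2), of t u]
      by (cases "t \<in> {a..u}") (simp_all add: set_lebesgue_integral_def)
    then show ?thesis
      using Gamma by (simp add: rl_integral_def set_lebesgue_integral_def)
  qed
  moreover have "Beta \<alpha> \<beta> * Gamma (\<alpha> + \<beta>) = Gamma \<alpha> * Gamma \<beta>"
    using Gamma by (simp add: Beta_def)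
  ultimately show ?thesis
    using Gamma by (simp add: mult_ac)
qed

lemma rl_integral_semigroup:
  fixes f :: "real \<Rightarrow> real"
  assumes "0 < \<alpha>" "0 < \<beta>" "continuous_on {a..b} f" "u \<in> {a..b}"
  shows "rl_integral a \<alpha> (rl_integral a \<beta> f) u = rl_integral a (\<alpha> + \<beta>) f u"
proof -
  define g where "g = (\<lambda>x. f (clamp a b x))"
  have g: "continuous_on UNIV g"
    using clamp_continuous_on[of a b f] assms(3) by (simp add: g_def)
  have "rl_integral a \<alpha> (rl_integral a \<beta> f) u = rl_integral a \<alpha> (rl_integral a \<beta> g) u"
    using assms(4) by (intro rl_integral_cong) (auto simp: g_def)
  also have "\<dots> = rl_integral a (\<alpha> + \<beta>) g u"
    using assms(4) by (intro rl_integral_semigroup_UNIV[OF assms(1,2) g]) auto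
  also have "\<dots> = rl_integral a (\<alpha> + \<beta>) f u"
    using assms(4) by (intro rl_integral_cong) (auto simp: g_def)
  finally show ?thesis .
qed

lemma rl_integral_suminf:
  fixes F :: "nat \<Rightarrow> real \<Rightarrow> real"
  assumes "0 < \<gamma>" "a \<le> u" "\<And>k. continuous_on {a..u} (F k)"
    and bound: "\<And>k s. s \<in> {a..u} \<Longrightarrow> \<bar>F k s\<bar> \<le> B k" and "summable B"
  shows "rl_integral a \<gamma> (\<lambda>s. \<Sum>k. F k s) u = (\<Sum>k. rl_integral a \<gamma> (F k) u)"
proof -
  define f where "f = (\<lambda>k s. (u - s) powr (\<gamma> - 1) * F k s)"
  have summable_F: "summable (\<lambda>k. \<bar>F k s\<bar>)" if "s \<in> {a..u}" for s
    using bound[OF that] by (intro summable_comparison_test[OF _ assms(5)]) auto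
  have "(\<lambda>k. LINT s:{a..u}|lborel. f k s) sums (LINT s:{a..u}|lborel. (\<Sum>k. f k s))"
  proof (rule set_integral_suminf(2))
    show "set_integrable lborel {a..u} (f k)" for k
      unfolding f_def by (rule set_integrable_rl_kernel_times[OF assms(1,3)])
    show "summable (\<lambda>k. \<bar>f k s\<bar>)" if "s \<in> {a..u}" for s
      using summable_mult[OF summable_F[OF that], of "(u - s) powr (\<gamma> - 1)"]
      by (simp add: f_def abs_mult)
    have bound_integral: "norm (LINT s:{a..u}|lborel. \<bar>f k s\<bar>) \<le> Gamma \<gamma> * (B k * (u - a) powr \<gamma> / Gamma (\<gamma> + 1))" for k
    proof -
      have "norm (LINT s:{a..u}|lborel. \<bar>f k s\<bar>) = Gamma \<gamma> * \<bar>rl_integral a \<gamma> (\<lambda>s. \<bar>F k s\<bar>) u\<bar>"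
        using Gamma_real_pos[OF assms(1)] by (simp add: f_def rl_integral_def abs_mult)
      also have "\<dots> \<le> Gamma \<gamma> * (B k * (u - a) powr \<gamma> / Gamma (\<gamma> + 1))"
        using assms(3) bound Gamma_real_pos[OF assms(1)]
        by (intro mult_left_mono abs_rl_integral_le[OF assms(1,2)] continuous_intros) auto
      finally show ?thesis .
    qed
    have "summable (\<lambda>k. Gamma \<gamma> * (B k * (u - a) powr \<gamma> / Gamma (\<gamma> + 1)))"
      using summable_mult[OF summable_divide[OF summable_mult2[OF assms(5)]]] .
    then show "summable (\<lambda>k. LINT s:{a..u}|lborel. \<bar>f k s\<bar>)"
      by (rule summable_comparison_test'[OF _ bound_integral])
  qed
  moreover have "(LINT s:{a..u}|lborel. (\<Sum>k. f k s)) = (LINT s:{a..u}|lborel. (u - s) powr (\<gamma> - 1) * (\<Sum>k. F k s))"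
    using suminf_mult[OF summable_rabs_cancel[OF summable_F]]
    by (intro set_lebesgue_integral_cong) (simp_all add: f_def)
  ultimately have "(\<lambda>k. 1 / Gamma \<gamma> * (LINT s:{a..u}|lborel. f k s)) sums rl_integral a \<gamma> (\<lambda>s. \<Sum>k. F k s) u"
    unfolding rl_integral_def using sums_mult[of _ _ "1 / Gamma \<gamma>"] by simp
  then show ?thesis
    unfolding f_def rl_integral_def by (simp add: sums_unique)
qed

text \<open>\<open>I\<^bsup>1-\<gamma>\<^esup> Y\<close> with \<open>I\<^sup>0\<close> the identity: when \<open>Y a = 0\<close>, its derivative is the Caputo derivative
  of \<open>Y\<close> of order \<open>\<gamma>\<close>.\<close>
definition caputo_primitive :: "real \<Rightarrow> real \<Rightarrow> (real \<Rightarrow> real) \<Rightarrow> real \<Rightarrow> real" where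
  "caputo_primitive a \<gamma> Y u = (if \<gamma> = 1 then Y u else rl_integral a (1 - \<gamma>) Y u)"

lemma caputo_primitive_cong:
  "a \<le> u \<Longrightarrow> (\<And>s. s \<in> {a..u} \<Longrightarrow> Y1 s = Y2 s) \<Longrightarrow> caputo_primitive a \<gamma> Y1 u = caputo_primitive a \<gamma> Y2 u"
  unfolding caputo_primitive_def by (cases "\<gamma> = 1") (auto intro: rl_integral_cong)

lemma caputo_primitive_diff:
  assumes "0 < \<gamma>" "\<gamma> \<le> 1" "continuous_on {a..u} Y1" "continuous_on {a..u} Y2"
  shows "caputo_primitive a \<gamma> (\<lambda>s. Y1 s - Y2 s) u = caputo_primitive a \<gamma> Y1 u - caputo_primitive a \<gamma> Y2 u"
  using rl_integral_linear[of "1 - \<gamma>" a u Y1 Y2 "- 1"] assms by (simp add: caputo_primitive_def)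

section \<open>The two-term equation\<close>

lemma powr_mult_Gamma_le_Gamma_add:
  fixes z \<delta> :: real
  assumes "1 < z" "0 < \<delta>"
  shows "(z - 1) powr \<delta> * Gamma z \<le> Gamma (z + \<delta>)"
proof -
  define t where "t = 1 / (1 + \<delta>)"
  have t: "0 \<le> t" "t \<le> 1" using assms by (auto simp: t_def)
  have t1: "1 - t = \<delta> / (1 + \<delta>)" using assms by (simp add: t_def field_simps)
  have "\<delta> / (1 + \<delta>) * (z - 1) + 1 / (1 + \<delta>) * (z + \<delta>) = (\<delta> * (z - 1) + (z + \<delta>)) / (1 + \<delta>)"
    by (simp add: add_divide_distrib)
  also have "\<delta> * (z - 1) + (z + \<delta>) = z * (1 + \<delta>)" by (simp add: algebra_simps)
  also have "z * (1 + \<delta>) / (1 + \<delta>) = z" using assms by simp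
  finally have pt: "(1 - t) *\<^sub>R (z - 1) + t *\<^sub>R (z + \<delta>) = z"
    unfolding t1 by (simp add: t_def)
  have c: "(ln \<circ> Gamma) ((1 - t) *\<^sub>R (z - 1) + t *\<^sub>R (z + \<delta>)) \<le> (1 - t) * (ln \<circ> Gamma) (z - 1) + t * (ln \<circ> Gamma) (z + \<delta>)"
    by (rule convex_onD[OF log_convex_Gamma_real t]) (use assms in auto)
  have g1: "Gamma z = (z - 1) * Gamma (z - 1)"
    using Gamma_plus1_real[of "z - 1"] assms by simp
  have gp: "Gamma (z - 1) > 0" "Gamma z > 0" "Gamma (z + \<delta>) > 0" using assms by (auto intro!: Gamma_real_pos)
  have "ln (Gamma z) = ln (z - 1) + ln (Gamma (z - 1))"
    unfolding g1 using gp(1) assms by (intro ln_mult_pos) auto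
  then have l1: "ln (Gamma (z - 1)) = ln (Gamma z) - ln (z - 1)" by simp
  have "ln (Gamma z) \<le> (1 - t) * (ln (Gamma z) - ln (z - 1)) + t * ln (Gamma (z + \<delta>))"
    using c unfolding pt l1[symmetric] by simp
  then have "(1 + \<delta>) * ln (Gamma z) \<le> (1 + \<delta>) * ((1 - t) * (ln (Gamma z) - ln (z - 1)) + t * ln (Gamma (z + \<delta>)))"
    using assms by (intro mult_left_mono) auto
  also have "\<dots> = ((1 + \<delta>) * (1 - t)) * (ln (Gamma z) - ln (z - 1)) + ((1 + \<delta>) * t) * ln (Gamma (z + \<delta>))"
    by (simp add: algebra_simps)
  also have "(1 + \<delta>) * (1 - t) = \<delta>" using assms unfolding t1 by simp
  also have "(1 + \<delta>) * t = 1" using assms unfolding t_def by simp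
  finally have "ln (Gamma z) + \<delta> * ln (z - 1) \<le> ln (Gamma (z + \<delta>))"
    by (simp add: algebra_simps)
  then have "exp (ln (Gamma z) + \<delta> * ln (z - 1)) \<le> exp (ln (Gamma (z + \<delta>)))" by simp
  then show ?thesis using gp assms by (simp add: exp_add powr_def mult.commute)
qed

lemma summable_Mittag_Leffler_abs:
  fixes \<delta> c x :: real
  assumes "0 < \<delta>" "0 < c"
  shows "summable (\<lambda>k. \<bar>x\<bar> ^ k / Gamma (\<delta> * real k + c))"
proof -
  define R where "R = max 1 ((2 * \<bar>x\<bar> + 1) powr (1 / \<delta>))"
  obtain N :: nat where N: "(R + 1) / \<delta> < real N" using reals_Archimedean2 by blast
  show ?thesis
  proof (rule summable_ratio_test[where c = "1/2" and N = N])
    fix n assume n: "N \<le> n"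
    define z where "z = \<delta> * real n + c"
    have "(R + 1) < \<delta> * real N" using N assms(1) by (simp add: field_simps)
    also have "\<dots> \<le> \<delta> * real n" using n assms(1) by (intro mult_left_mono) auto
    finally have zR: "z - 1 > R" unfolding z_def using assms by simp
    have R1: "R \<ge> 1" unfolding R_def by simp
    then have z1: "z > 1" using zR by simp
    have gz: "Gamma z > 0" "Gamma (z + \<delta>) > 0" using z1 assms by (auto intro!: Gamma_real_pos)
    have "(z - 1) powr \<delta> \<ge> ((2 * \<bar>x\<bar> + 1) powr (1 / \<delta>)) powr \<delta>"
      using zR R1 assms(1) unfolding R_def by (intro powr_mono2) auto
    also have "((2 * \<bar>x\<bar> + 1) powr (1 / \<delta>)) powr \<delta> = 2 * \<bar>x\<bar> + 1"
      using assms(1) by (simp add: powr_powr)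
    finally have zx: "2 * \<bar>x\<bar> \<le> (z - 1) powr \<delta>" by simp
    have "2 * \<bar>x\<bar> * Gamma z \<le> (z - 1) powr \<delta> * Gamma z"
      using zx gz by (intro mult_right_mono) auto
    also have "\<dots> \<le> Gamma (z + \<delta>)" by (rule powr_mult_Gamma_le_Gamma_add[OF z1 assms(1)])
    finally have key: "2 * \<bar>x\<bar> * Gamma z \<le> Gamma (z + \<delta>)" .
    have zs: "\<delta> * real (Suc n) + c = z + \<delta>" unfolding z_def by (simp add: algebra_simps)
    have "\<bar>x\<bar> ^ n * (2 * \<bar>x\<bar> * Gamma z) \<le> \<bar>x\<bar> ^ n * Gamma (z + \<delta>)"
      by (rule mult_left_mono[OF key]) simp
    then have "\<bar>x\<bar> ^ Suc n * Gamma z * 2 \<le> \<bar>x\<bar> ^ n * Gamma (z + \<delta>)" by (simp add: mult_ac)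
    then have "\<bar>x\<bar> ^ Suc n / Gamma (z + \<delta>) \<le> 1 / 2 * (\<bar>x\<bar> ^ n / Gamma z)"
      using gz by (simp add: divide_simps mult_ac)
    then show "norm (\<bar>x\<bar> ^ Suc n / Gamma (\<delta> * real (Suc n) + c)) \<le> 1 / 2 * norm (\<bar>x\<bar> ^ n / Gamma (\<delta> * real n + c))"
      using gz unfolding zs z_def[symmetric] by simp
  qed simp
qed

lemma summable_Mittag_Leffler:
  fixes \<delta> c x :: real
  assumes "0 < \<delta>" "0 < c"
  shows "summable (\<lambda>k. x ^ k / Gamma (\<delta> * real k + c))"
proof (rule summable_comparison_test[OF _ summable_Mittag_Leffler_abs[OF assms, of x]])
  have gp: "Gamma (\<delta> * real n + c) > 0" for n using assms by (intro Gamma_real_pos) (auto intro: add_nonneg_pos)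
  show "\<exists>N. \<forall>n\<ge>N. norm (x ^ n / Gamma (\<delta> * real n + c)) \<le> \<bar>x\<bar> ^ n / Gamma (\<delta> * real n + c)"
    by (intro exI[of _ 0] allI impI) (simp add: power_abs abs_of_pos gp)
qed

lemma continuous_on_suminf_bounded:
  fixes F :: "nat \<Rightarrow> real \<Rightarrow> real"
  assumes "\<And>k. continuous_on S (F k)" "\<And>k s. s \<in> S \<Longrightarrow> \<bar>F k s\<bar> \<le> B k" "summable B"
  shows "continuous_on S (\<lambda>s. \<Sum>k. F k s)"
proof (rule uniform_limit_theorem)
  show "uniform_limit S (\<lambda>n s. \<Sum>k<n. F k s) (\<lambda>s. \<Sum>k. F k s) sequentially"
    by (rule Weierstrass_m_test[OF _ assms(3)]) (use assms(2) in auto)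
  show "\<forall>\<^sub>F n in sequentially. continuous_on S (\<lambda>s. \<Sum>k<n. F k s)"
    by (intro always_eventually allI continuous_on_sum assms(1))
qed simp

lemma powr_add_mult_of_nat:
  fixes x :: real
  assumes "0 \<le> x"
  shows "x powr (c + \<delta> * real k) = x powr c * (x powr \<delta>) ^ k"
proof (cases "x = 0")
  case False
  then have "x powr (\<delta> * real k) = (x powr \<delta>) ^ k"
    using assms by (simp add: powr_powr[symmetric] powr_realpow)
  then show ?thesis by (simp add: powr_add)
qed simp

lemma rl_integral_series_majorant:
  fixes f :: "real \<Rightarrow> real"
  assumes "0 < \<delta>" "0 < c" "continuous_on {a..b} f"
  obtains B where "summable B" "\<And>k s. s \<in> {a..b} \<Longrightarrow> \<bar>\<rho>\<bar> ^ k * \<bar>rl_integral a (\<delta> * real k + c) f s\<bar> \<le> B k"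
proof -
  obtain M where M: "0 \<le> M" "\<And>s. s \<in> {a..b} \<Longrightarrow> \<bar>f s\<bar> \<le> M"
    using continuous_on_Icc_abs_bound[OF assms(3)] by blast
  define B where "B k = M * (b - a) powr c * (\<bar>\<rho>\<bar> * (b - a) powr \<delta>) ^ k / Gamma (\<delta> * real k + (c + 1))" for k
  have "summable B"
    using summable_mult[OF summable_Mittag_Leffler[OF assms(1), of "c + 1" "\<bar>\<rho>\<bar> * (b - a) powr \<delta>"],
        of "M * (b - a) powr c"] assms(2)
    unfolding B_def by (simp add: mult_ac)
  moreover have "\<bar>\<rho>\<bar> ^ k * \<bar>rl_integral a (\<delta> * real k + c) f s\<bar> \<le> B k" if s: "s \<in> {a..b}" for k s
  proof -
    have p: "0 < \<delta> * real k + c" using assms by (intro add_nonneg_pos) auto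
    have "\<bar>rl_integral a (\<delta> * real k + c) f s\<bar> \<le> M * (b - a) powr (\<delta> * real k + c) / Gamma (\<delta> * real k + c + 1)"
      by (rule abs_rl_integral_le_Icc[OF p assms(3) M(2) s])
    also have "(b - a) powr (\<delta> * real k + c) = (b - a) powr c * ((b - a) powr \<delta>) ^ k"
      using powr_add_mult_of_nat[of "b - a" c \<delta> k] s by (simp add: add.commute)
    finally have "\<bar>\<rho>\<bar> ^ k * \<bar>rl_integral a (\<delta> * real k + c) f s\<bar>
        \<le> \<bar>\<rho>\<bar> ^ k * (M * ((b - a) powr c * ((b - a) powr \<delta>) ^ k) / Gamma (\<delta> * real k + c + 1))"
      by (intro mult_left_mono) auto
    then show ?thesis
      unfolding B_def by (simp add: power_mult_distrib mult_ac add_ac)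
  qed
  ultimately show thesis
    using that by blast
qed

lemma Mittag_Leffler_kernel_sums:
  fixes x :: real
  assumes "0 < \<delta>" "0 < c" "0 \<le> x"
  shows "(\<lambda>k. (- \<rho>) ^ k / Gamma (\<delta> * real k + c) * x powr (\<delta> * real k + c - 1))
           sums (x powr (c - 1) * ML2 \<delta> c (- \<rho> * x powr \<delta>))"
    and "summable (\<lambda>k. \<bar>(- \<rho>) ^ k / Gamma (\<delta> * real k + c) * x powr (\<delta> * real k + c - 1)\<bar>)"
proof -
  have expansion: "(- \<rho>) ^ k / Gamma (\<delta> * real k + c) * x powr (\<delta> * real k + c - 1)
      = x powr (c - 1) * ((- \<rho> * x powr \<delta>) ^ k / Gamma (\<delta> * real k + c))" for k
    using powr_add_mult_of_nat[OF assms(3), of "c - 1" \<delta> k] power_mult_distrib[of "- \<rho>" "x powr \<delta>" k]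
    by (simp add: algebra_simps)
  show "(\<lambda>k. (- \<rho>) ^ k / Gamma (\<delta> * real k + c) * x powr (\<delta> * real k + c - 1))
      sums (x powr (c - 1) * ML2 \<delta> c (- \<rho> * x powr \<delta>))"
    unfolding expansion ML2_def by (intro sums_mult summable_sums summable_Mittag_Leffler assms)
  have "\<bar>Gamma (\<delta> * real k + c)\<bar> = Gamma (\<delta> * real k + c)" for k
    using assms by (intro abs_of_pos Gamma_real_pos add_nonneg_pos) auto
  then show "summable (\<lambda>k. \<bar>(- \<rho>) ^ k / Gamma (\<delta> * real k + c) * x powr (\<delta> * real k + c - 1)\<bar>)"
    using summable_mult[OF summable_Mittag_Leffler_abs[OF assms(1,2), of "- \<rho> * x powr \<delta>"], of "x powr (c - 1)"]
    unfolding expansion by (simp add: abs_mult power_abs)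
qed

locale rl_neumann_series =
  fixes a b \<delta> \<rho> :: real and H :: "real \<Rightarrow> real"
  assumes \<delta>_pos: "0 < \<delta>" and continuous_H: "continuous_on {a..b} H"
begin

text \<open>\<open>\<Sum>\<^sub>k (-\<rho>)\<^sup>k I\<^bsup>\<delta>k+c\<^esup> H\<close>, the Mittag-Leffler function of the operator \<open>-\<rho> I\<^sup>\<delta>\<close> applied
  to \<open>I\<^sup>c H\<close>.\<close>
definition ml_series :: "real \<Rightarrow> real \<Rightarrow> real" where
  "ml_series c u = (\<Sum>k. (- \<rho>) ^ k * rl_integral a (\<delta> * real k + c) H u)"

lemma ml_series_majorant:
  assumes "0 < c"
  obtains B where "summable B"
    "\<And>k s. s \<in> {a..b} \<Longrightarrow> \<bar>(- \<rho>) ^ k * rl_integral a (\<delta> * real k + c) H s\<bar> \<le> B k"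
  using rl_integral_series_majorant[OF \<delta>_pos assms continuous_H, of \<rho>] by (auto simp: abs_mult power_abs)

lemma summable_ml_series: "0 < c \<Longrightarrow> u \<in> {a..b} \<Longrightarrow> summable (\<lambda>k. (- \<rho>) ^ k * rl_integral a (\<delta> * real k + c) H u)"
  by (rule ml_series_majorant, assumption) (auto intro: summable_comparison_test')

lemma continuous_on_ml_series: "0 < c \<Longrightarrow> continuous_on {a..b} (ml_series c)"
  unfolding ml_series_def
  by (rule ml_series_majorant, assumption, rule continuous_on_suminf_bounded)
     (use \<delta>_pos in \<open>auto intro!: continuous_intros continuous_on_rl_integral continuous_H add_nonneg_pos\<close>)

lemma ml_series_base: "ml_series c a = 0"
  by (simp add: ml_series_def)

lemma rl_integral_ml_series:
  assumes "0 < c" "0 < q" "u \<in> {a..b}"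
  shows "rl_integral a q (ml_series c) u = ml_series (c + q) u"
proof -
  have p: "0 < \<delta> * real k + c" for k using \<delta>_pos assms by (intro add_nonneg_pos) auto
  obtain B where B: "summable B"
    "\<And>k s. s \<in> {a..b} \<Longrightarrow> \<bar>(- \<rho>) ^ k * rl_integral a (\<delta> * real k + c) H s\<bar> \<le> B k"
    using ml_series_majorant[OF assms(1)] by blast
  have "rl_integral a q (ml_series c) u = (\<Sum>k. rl_integral a q (\<lambda>s. (- \<rho>) ^ k * rl_integral a (\<delta> * real k + c) H s) u)"
    unfolding ml_series_def using assms(3) B
    by (intro rl_integral_suminf[OF assms(2)] continuous_intros continuous_on_subset[OF continuous_on_rl_integral[OF p continuous_H]]) auto
  also have "\<dots> = ml_series (c + q) u"
    unfolding ml_series_def rl_integral_cmult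
    using rl_integral_semigroup[OF assms(2) p continuous_H assms(3)] by (simp add: add_ac)
  finally show ?thesis .
qed

lemma ml_series_unfold:
  assumes "0 < c" "u \<in> {a..b}"
  shows "ml_series c u = rl_integral a c H u - \<rho> * ml_series (c + \<delta>) u"
proof -
  have c\<delta>: "0 < c + \<delta>" using assms \<delta>_pos by simp
  have "ml_series c u = rl_integral a c H u + (\<Sum>k. (- \<rho>) ^ Suc k * rl_integral a (\<delta> * real (Suc k) + c) H u)"
    unfolding ml_series_def using suminf_split_head[OF summable_ml_series[OF assms]] by simp
  also have "(\<Sum>k. (- \<rho>) ^ Suc k * rl_integral a (\<delta> * real (Suc k) + c) H u) = - \<rho> * ml_series (c + \<delta>) u"
    unfolding ml_series_def using suminf_mult[OF summable_ml_series[OF c\<delta> assms(2)], of "- \<rho>"]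
    by (simp add: algebra_simps)
  finally show ?thesis by simp
qed

lemma set_integral_ml_kernel:
  assumes "0 < c" "v \<in> {a..b}"
  shows "set_integrable lborel {a..v} (\<lambda>s. (v - s) powr (c - 1) * ML2 \<delta> c (- \<rho> * (v - s) powr \<delta>) * H s)"
    and "(LINT s:{a..v}|lborel. (v - s) powr (c - 1) * ML2 \<delta> c (- \<rho> * (v - s) powr \<delta>) * H s) = ml_series c v"
proof -
  have p: "0 < \<delta> * real k + c" for k using \<delta>_pos assms by (intro add_nonneg_pos) auto
  have H: "continuous_on {a..v} H" using assms(2) by (intro continuous_on_subset[OF continuous_H]) auto
  define f where "f = (\<lambda>k s. (- \<rho>) ^ k / Gamma (\<delta> * real k + c) * (v - s) powr (\<delta> * real k + c - 1) * H s)"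
  have kernel: "s \<in> {a..v} \<Longrightarrow> (\<lambda>k. f k s) sums ((v - s) powr (c - 1) * ML2 \<delta> c (- \<rho> * (v - s) powr \<delta>) * H s)"
    and summable_f: "s \<in> {a..v} \<Longrightarrow> summable (\<lambda>k. \<bar>f k s\<bar>)" for s
    using sums_mult2[OF Mittag_Leffler_kernel_sums(1)[OF \<delta>_pos assms(1), of "v - s" \<rho>], of "H s"]
      summable_mult2[OF Mittag_Leffler_kernel_sums(2)[OF \<delta>_pos assms(1), of "v - s" \<rho>], of "\<bar>H s\<bar>"]
    by (simp_all add: f_def abs_mult)
  have integrable_f: "set_integrable lborel {a..v} (f k)" for k
    using set_integrable_mult_right[OF set_integrable_rl_kernel_times[OF p[of k] H], of "(- \<rho>) ^ k / Gamma (\<delta> * real k + c)"]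
    by (simp add: f_def mult_ac)
  have integral_abs_f: "(LINT s:{a..v}|lborel. \<bar>f k s\<bar>) = \<bar>\<rho>\<bar> ^ k * rl_integral a (\<delta> * real k + c) (\<lambda>s. \<bar>H s\<bar>) v"
    for k
  proof -
    have "(\<lambda>s. \<bar>f k s\<bar>) = (\<lambda>s. \<bar>\<rho>\<bar> ^ k / Gamma (\<delta> * real k + c) * ((v - s) powr (\<delta> * real k + c - 1) * \<bar>H s\<bar>))"
      using abs_of_pos[OF Gamma_real_pos[OF p[of k]]] by (auto simp: f_def abs_mult power_abs)
    then show ?thesis
      by (simp add: rl_integral_def)
  qed
  have "continuous_on {a..b} (\<lambda>s. \<bar>H s\<bar>)"
    by (intro continuous_intros continuous_H)
  then obtain B where B: "summable B"
    "\<And>k s. s \<in> {a..b} \<Longrightarrow> \<bar>\<rho>\<bar> ^ k * \<bar>rl_integral a (\<delta> * real k + c) (\<lambda>s. \<bar>H s\<bar>) s\<bar> \<le> B k"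
    using rl_integral_series_majorant[OF \<delta>_pos assms(1)] by blast
  have "norm (LINT s:{a..v}|lborel. \<bar>f k s\<bar>) \<le> B k" for k
    using B(2)[OF assms(2), of k] by (simp add: integral_abs_f abs_mult)
  then have summable_integrals: "summable (\<lambda>k. LINT s:{a..v}|lborel. \<bar>f k s\<bar>)"
    by (rule summable_comparison_test'[OF B(1)])
  have sum_f: "(\<Sum>k. f k s) = (v - s) powr (c - 1) * ML2 \<delta> c (- \<rho> * (v - s) powr \<delta>) * H s" if "s \<in> {a..v}" for s
    by (rule sums_unique[OF kernel[OF that], symmetric])
  note series = set_integral_suminf[OF integrable_f summable_f summable_integrals]
  show "set_integrable lborel {a..v} (\<lambda>s. (v - s) powr (c - 1) * ML2 \<delta> c (- \<rho> * (v - s) powr \<delta>) * H s)"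
    using series(1) by (rule set_integrable_cong[THEN iffD1, rotated 3]) (simp_all add: sum_f)
  have "(LINT s:{a..v}|lborel. (v - s) powr (c - 1) * ML2 \<delta> c (- \<rho> * (v - s) powr \<delta>) * H s)
      = (LINT s:{a..v}|lborel. (\<Sum>k. f k s))"
    by (rule set_lebesgue_integral_cong) (simp_all add: sum_f)
  moreover have "(LINT s:{a..v}|lborel. f k s) = (- \<rho>) ^ k * rl_integral a (\<delta> * real k + c) H v" for k
  proof -
    have "f k = (\<lambda>s. (- \<rho>) ^ k / Gamma (\<delta> * real k + c) * ((v - s) powr (\<delta> * real k + c - 1) * H s))"
      by (auto simp: f_def)
    then show ?thesis
      by (simp add: rl_integral_def)
  qed
  ultimately show "(LINT s:{a..v}|lborel. (v - s) powr (c - 1) * ML2 \<delta> c (- \<rho> * (v - s) powr \<delta>) * H s) = ml_series c v"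
    using sums_unique[OF series(2)] by (simp add: ml_series_def)
qed

lemma caputo_primitive_ml_series:
  assumes "0 < c" "0 < \<gamma>" "\<gamma> \<le> 1" "u \<in> {a..b}"
  shows "caputo_primitive a \<gamma> (ml_series c) u = ml_series (c + 1 - \<gamma>) u"
  using rl_integral_ml_series[OF assms(1) _ assms(4), of "1 - \<gamma>"] assms(2,3)
  by (auto simp: caputo_primitive_def add_diff_eq)

lemma ml_series_one:
  assumes "u \<in> {a..b}"
  shows "ml_series 1 u = rl_integral a 1 (\<lambda>s. H s - \<rho> * ml_series \<delta> s) u"
proof -
  have "ml_series 1 u = rl_integral a 1 H u - \<rho> * ml_series (\<delta> + 1) u"
    using ml_series_unfold[OF zero_less_one assms] by (simp add: add.commute)
  moreover have "ml_series (\<delta> + 1) u = rl_integral a 1 (ml_series \<delta>) u"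
    using rl_integral_ml_series[OF \<delta>_pos zero_less_one assms] ..
  moreover have "rl_integral a 1 (\<lambda>s. H s + (- \<rho>) * ml_series \<delta> s) u
      = rl_integral a 1 H u + (- \<rho>) * rl_integral a 1 (ml_series \<delta>) u"
    using assms by (intro rl_integral_linear continuous_on_subset[OF continuous_H]
        continuous_on_subset[OF continuous_on_ml_series[OF \<delta>_pos]]) auto
  ultimately show ?thesis by simp
qed

lemma caputo_primitives_ml_series:
  assumes "0 < \<kappa>" "\<mu> \<le> 1" "\<delta> = \<mu> - \<kappa>" "u \<in> {a..b}"
  shows "caputo_primitive a \<mu> (ml_series \<mu>) u = rl_integral a 1 (\<lambda>s. H s - \<rho> * ml_series \<delta> s) u"
    and "caputo_primitive a \<kappa> (ml_series \<mu>) u = rl_integral a 1 (ml_series \<delta>) u"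
proof -
  have \<mu>: "0 < \<mu>" using assms(1,3) \<delta>_pos by simp
  show "caputo_primitive a \<mu> (ml_series \<mu>) u = rl_integral a 1 (\<lambda>s. H s - \<rho> * ml_series \<delta> s) u"
    using caputo_primitive_ml_series[OF \<mu> \<mu> assms(2,4)] ml_series_one[OF assms(4)] by simp
  have order: "\<mu> + 1 - \<kappa> = \<delta> + 1" and "\<kappa> \<le> 1"
    using assms(2,3) \<delta>_pos by simp_all
  then have "caputo_primitive a \<kappa> (ml_series \<mu>) u = ml_series (\<delta> + 1) u"
    using caputo_primitive_ml_series[OF \<mu> assms(1) _ assms(4)] unfolding order by blast
  also have "\<dots> = rl_integral a 1 (ml_series \<delta>) u"
    using rl_integral_ml_series[OF \<delta>_pos zero_less_one assms(4)] ..
  finally show "caputo_primitive a \<kappa> (ml_series \<mu>) u = rl_integral a 1 (ml_series \<delta>) u" .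
qed

lemma caputo_two_term_ml_series:
  assumes "0 < \<kappa>" "\<mu> \<le> 1" "\<delta> = \<mu> - \<kappa>" "u \<in> {a..b}"
  shows "caputo_primitive a \<mu> (ml_series \<mu>) u + \<rho> * caputo_primitive a \<kappa> (ml_series \<mu>) u = rl_integral a 1 H u"
proof -
  have "rl_integral a 1 (\<lambda>s. H s + (- \<rho>) * ml_series \<delta> s) u
      = rl_integral a 1 H u + (- \<rho>) * rl_integral a 1 (ml_series \<delta>) u"
    using assms(4) by (intro rl_integral_linear continuous_on_subset[OF continuous_H]
        continuous_on_subset[OF continuous_on_ml_series[OF \<delta>_pos]]) auto
  then show ?thesis
    using caputo_primitives_ml_series[OF assms] by simp
qed

end

lemma rl_volterra_bound:
  fixes D :: "real \<Rightarrow> real"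
  assumes D: "continuous_on {a..b} D" and \<delta>: "0 < \<delta>"
    and volterra: "\<And>v. v \<in> {a..b} \<Longrightarrow> D v = - \<rho> * rl_integral a \<delta> D v"
    and M: "\<And>v. v \<in> {a..b} \<Longrightarrow> \<bar>D v\<bar> \<le> M"
    and "v \<in> {a..b}"
  shows "\<bar>D v\<bar> \<le> M * \<bar>\<rho>\<bar> ^ k * (v - a) powr (\<delta> * real k) / Gamma (\<delta> * real k + 1)"
  using \<open>v \<in> {a..b}\<close>
proof (induction k arbitrary: v)
  case 0
  \<comment> \<open>\<open>0 powr 0 = 0\<close>, so at \<open>v = a\<close> this needs \<open>D a = 0\<close>, which the equation provides\<close>
  then show ?case
    using M[OF 0] volterra[of a] by (cases "v = a") auto
next
  case (Suc k)
  define C where "C = M * \<bar>\<rho>\<bar> ^ k / Gamma (\<delta> * real k + 1)"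
  have "0 \<le> \<delta> * real k" using \<delta> by simp
  then have order: "-1 < \<delta> * real k" "0 < \<delta> * real k + 1" by linarith+
  have "\<bar>rl_integral a \<delta> D v\<bar> \<le> rl_integral a \<delta> (\<lambda>s. C * (s - a) powr (\<delta> * real k)) v"
  proof (rule abs_rl_integral_le_rl_integral[OF \<delta>])
    show "continuous_on {a..v} D" using Suc.prems by (intro continuous_on_subset[OF D]) auto
    show "set_integrable lborel {a..v} (\<lambda>s. (v - s) powr (\<delta> - 1) * (C * (s - a) powr (\<delta> * real k)))"
    proof -
      have "set_integrable lborel {a..v} (\<lambda>s. C * ((v - s) powr (\<delta> - 1) * (s - a) powr (\<delta> * real k + 1 - 1)))"
        using set_integral_Beta_kernel(1)[OF \<delta> order(2), of a v] Suc.prems by auto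
      then show ?thesis by (simp add: mult_ac)
    qed
    show "\<bar>D s\<bar> \<le> C * (s - a) powr (\<delta> * real k)" if "s \<in> {a..v}" for s
      using Suc.IH[of s] that Suc.prems by (simp add: C_def)
  qed
  also have "\<dots> = C * (Gamma (\<delta> * real k + 1) / Gamma (\<delta> * real (Suc k) + 1) * (v - a) powr (\<delta> * real (Suc k)))"
    using rl_integral_power[OF \<delta> order(1), of a v] Suc.prems by (simp add: rl_integral_cmult algebra_simps)
  finally have "\<bar>\<rho>\<bar> * \<bar>rl_integral a \<delta> D v\<bar> \<le> \<bar>\<rho>\<bar> * (C * (Gamma (\<delta> * real k + 1) / Gamma (\<delta> * real (Suc k) + 1)
      * (v - a) powr (\<delta> * real (Suc k))))"
    by (rule mult_left_mono) simp
  also have "\<dots> = M * \<bar>\<rho>\<bar> ^ Suc k * (v - a) powr (\<delta> * real (Suc k)) / Gamma (\<delta> * real (Suc k) + 1)"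
    using Gamma_real_pos[OF order(2)] by (simp add: C_def)
  finally show ?case
    using volterra[OF Suc.prems] by (simp add: abs_mult)
qed

lemma rl_volterra_eq_zero:
  fixes D :: "real \<Rightarrow> real"
  assumes D: "continuous_on {a..b} D" and \<delta>: "0 < \<delta>"
    and volterra: "\<And>v. v \<in> {a..b} \<Longrightarrow> D v = - \<rho> * rl_integral a \<delta> D v"
    and u: "u \<in> {a..b}"
  shows "D u = 0"
proof -
  obtain M where M: "0 \<le> M" "\<And>v. v \<in> {a..b} \<Longrightarrow> \<bar>D v\<bar> \<le> M"
    using continuous_on_Icc_abs_bound[OF D] by blast
  define x where "x = \<bar>\<rho>\<bar> * (b - a) powr \<delta>"
  have "\<bar>D u\<bar> \<le> M * (x ^ k / Gamma (\<delta> * real k + 1))" for k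
  proof -
    have "(u - a) powr (\<delta> * real k) \<le> (b - a) powr (\<delta> * real k)"
      using u \<delta> by (intro powr_mono2) auto
    also have "\<dots> \<le> ((b - a) powr \<delta>) ^ k"
      using powr_add_mult_of_nat[of "b - a" 0 \<delta> k] u by (cases "b = a") auto
    finally have "M * \<bar>\<rho>\<bar> ^ k * (u - a) powr (\<delta> * real k) / Gamma (\<delta> * real k + 1)
        \<le> M * \<bar>\<rho>\<bar> ^ k * ((b - a) powr \<delta>) ^ k / Gamma (\<delta> * real k + 1)"
      using M(1) \<delta> Gamma_real_pos[of "\<delta> * real k + 1"]
      by (intro divide_right_mono mult_left_mono) (auto simp: add_nonneg_pos)
    then show ?thesis
      using rl_volterra_bound[OF D \<delta> volterra M(2) u, of k] by (simp add: x_def power_mult_distrib)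
  qed
  moreover have "(\<lambda>k. M * (x ^ k / Gamma (\<delta> * real k + 1))) \<longlonglongrightarrow> 0"
    using tendsto_mult_right_zero[OF summable_LIMSEQ_zero[OF summable_Mittag_Leffler[OF \<delta> zero_less_one]]] .
  ultimately have "\<bar>D u\<bar> \<le> 0"
    by (intro LIMSEQ_le_const) auto
  then show ?thesis by simp
qed

lemma rl_integral_caputo_two_term:
  fixes D :: "real \<Rightarrow> real"
  assumes D: "continuous_on {a..b} D" and orders: "0 < \<kappa>" "\<kappa> < \<mu>" "\<mu> \<le> 1" and w: "w \<in> {a..b}"
  shows "rl_integral a \<mu> (\<lambda>s. caputo_primitive a \<mu> D s + \<rho> * caputo_primitive a \<kappa> D s) w
       = rl_integral a 1 (\<lambda>s. D s + \<rho> * rl_integral a (\<mu> - \<kappa>) D s) w"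
proof (cases "\<mu> = 1")
  case True
  then show ?thesis
    using orders by (simp add: caputo_primitive_def)
next
  case False
  then have \<mu>: "0 < \<mu>" "0 < 1 - \<mu>" "0 < 1 - \<kappa>" and \<delta>: "0 < \<mu> - \<kappa>"
    using orders by auto
  have I: "continuous_on {a..w} (rl_integral a p D)" if "0 < p" for p
    using w by (intro continuous_on_subset[OF continuous_on_rl_integral[OF that D]]) auto
  have "rl_integral a \<mu> (\<lambda>s. caputo_primitive a \<mu> D s + \<rho> * caputo_primitive a \<kappa> D s) w
      = rl_integral a \<mu> (\<lambda>s. rl_integral a (1 - \<mu>) D s + \<rho> * rl_integral a (1 - \<kappa>) D s) w"
    using False orders by (simp add: caputo_primitive_def)
  also have "\<dots> = rl_integral a \<mu> (rl_integral a (1 - \<mu>) D) w + \<rho> * rl_integral a \<mu> (rl_integral a (1 - \<kappa>) D) w"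
    by (intro rl_integral_linear I \<mu>)
  also have "\<dots> = rl_integral a 1 D w + \<rho> * rl_integral a 1 (rl_integral a (\<mu> - \<kappa>) D) w"
    using rl_integral_semigroup[OF \<mu>(1,2) D w] rl_integral_semigroup[OF \<mu>(1,3) D w]
      rl_integral_semigroup[OF zero_less_one \<delta> D w]
    by (simp add: algebra_simps)
  also have "\<dots> = rl_integral a 1 (\<lambda>s. D s + \<rho> * rl_integral a (\<mu> - \<kappa>) D s) w"
    using w by (intro rl_integral_linear[symmetric] I \<delta> continuous_on_subset[OF D]) auto
  finally show ?thesis .
qed

lemma caputo_two_term_homogeneous:
  fixes D :: "real \<Rightarrow> real"
  assumes ab: "a < b" and D: "continuous_on {a..b} D" and orders: "0 < \<kappa>" "\<kappa> < \<mu>" "\<mu> \<le> 1"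
    and homogeneous: "\<And>v. v \<in> {a..b} \<Longrightarrow> caputo_primitive a \<mu> D v + \<rho> * caputo_primitive a \<kappa> D v = 0"
    and u: "u \<in> {a..b}"
  shows "D u = 0"
proof (rule rl_volterra_eq_zero[OF D _ _ u])
  show \<delta>: "0 < \<mu> - \<kappa>"
    using orders by simp
  have "continuous_on {a..b} (\<lambda>s. D s + \<rho> * rl_integral a (\<mu> - \<kappa>) D s)"
    using D continuous_on_rl_integral[OF \<delta> D] by (intro continuous_intros)
  moreover have "rl_integral a 1 (\<lambda>s. D s + \<rho> * rl_integral a (\<mu> - \<kappa>) D s) w = 0" if "w \<in> {a..b}" for w
  proof -
    have "rl_integral a \<mu> (\<lambda>s. caputo_primitive a \<mu> D s + \<rho> * caputo_primitive a \<kappa> D s) w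
        = rl_integral a \<mu> (\<lambda>s. 0) w"
      using homogeneous that by (intro rl_integral_cong) auto
    also have "\<dots> = 0"
      by (simp add: rl_integral_def)
    finally show ?thesis
      using rl_integral_caputo_two_term[OF D orders that] by simp
  qed
  ultimately have "D v + \<rho> * rl_integral a (\<mu> - \<kappa>) D v = 0" if "v \<in> {a..b}" for v
    using rl_integral_one_eq_zero_imp_eq_zero[OF ab _ _ that] by blast
  then show "D v = - \<rho> * rl_integral a (\<mu> - \<kappa>) D v" if "v \<in> {a..b}" for v
    using that by (simp add: eq_neg_iff_add_eq_0)
qed

lemma caputo_two_term_unique:
  fixes Y1 Y2 :: "real \<Rightarrow> real"
  assumes "a < b" "continuous_on {a..b} Y1" "continuous_on {a..b} Y2" "0 < \<kappa>" "\<kappa> < \<mu>" "\<mu> \<le> 1"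
    and "\<And>v. v \<in> {a..b} \<Longrightarrow> caputo_primitive a \<mu> Y1 v + \<rho> * caputo_primitive a \<kappa> Y1 v
                             = caputo_primitive a \<mu> Y2 v + \<rho> * caputo_primitive a \<kappa> Y2 v"
    and "u \<in> {a..b}"
  shows "Y1 u = Y2 u"
proof -
  have "Y1 u - Y2 u = 0"
  proof (rule caputo_two_term_homogeneous[OF assms(1) _ assms(4-6) _ assms(8)])
    show "continuous_on {a..b} (\<lambda>s. Y1 s - Y2 s)"
      by (intro continuous_intros assms(2,3))
    fix v assume v: "v \<in> {a..b}"
    then have "continuous_on {a..v} Y1" "continuous_on {a..v} Y2"
      by (auto intro: continuous_on_subset[OF assms(2)] continuous_on_subset[OF assms(3)])
    then show "caputo_primitive a \<mu> (\<lambda>s. Y1 s - Y2 s) v + \<rho> * caputo_primitive a \<kappa> (\<lambda>s. Y1 s - Y2 s) v = 0"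
      using assms(4-6) assms(7)[OF v] by (simp add: caputo_primitive_diff algebra_simps)
  qed
  then show ?thesis by simp
qed

section \<open>Change of variables\<close>

lemma set_borel_measurable_derivative:
  fixes f f' :: "real \<Rightarrow> real"
  assumes deriv: "\<And>x. x \<in> {a..b} \<Longrightarrow> (f has_real_derivative f' x) (at x within {a..b})"
  shows "set_borel_measurable lborel {a..b} f'"
proof -
  have "continuous_on {a..b} f"
    using deriv DERIV_continuous continuous_on_eq_continuous_within by blast
  then have [measurable]: "(\<lambda>x. f (clamp a b x)) \<in> borel_measurable borel"
    using clamp_continuous_on[of a b f] by (intro borel_measurable_continuous_onI) simp
  define q where "q k x = (if a \<le> x \<and> x < b then (f (clamp a b (x + 1 / Suc k)) - f (clamp a b x)) * Suc k else 0)"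
    for k x
  define g where "g x = (if a \<le> x \<and> x < b then f' x else 0)" for x
  have "(\<lambda>k. q k x) \<longlonglongrightarrow> g x" for x
  proof (cases "a \<le> x \<and> x < b")
    case True
    then have x: "x \<in> {a..b}" by auto
    have inverse: "(\<lambda>k. 1 / real (Suc k)) \<longlonglongrightarrow> 0"
      using LIMSEQ_inverse_real_of_nat by (simp add: inverse_eq_divide)
    have "\<forall>\<^sub>F k in sequentially. 1 / real (Suc k) < b - x"
      by (rule order_tendstoD(2)[OF inverse]) (use True in simp)
    then have eventually_in: "\<forall>\<^sub>F k in sequentially. x + 1 / Suc k \<in> {a..b} - {x}"
    proof eventually_elim
      case (elim k)
      have "0 < 1 / real (Suc k)" by simp
      then have "a \<le> x + 1 / Suc k" "x + 1 / Suc k \<le> b" "x + 1 / Suc k \<noteq> x"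
        using elim True by linarith+
      then show ?case by simp
    qed
    have "filterlim (\<lambda>k. x + 1 / Suc k) (at x within {a..b}) sequentially"
      unfolding filterlim_at using eventually_in tendsto_add[OF tendsto_const inverse, of x]
      by (auto elim: eventually_mono)
    from filterlim_compose[OF deriv[OF x, unfolded has_field_derivative_iff] this]
    have "(\<lambda>k. (f (x + 1 / Suc k) - f x) / (x + 1 / Suc k - x)) \<longlonglongrightarrow> f' x" .
    moreover have "\<forall>\<^sub>F k in sequentially. (f (x + 1 / Suc k) - f x) / (x + 1 / Suc k - x) = q k x"
      using eventually_in by eventually_elim (use True in \<open>auto simp: q_def\<close>)
    ultimately show ?thesis
      using True by (simp add: g_def Lim_transform_eventually)
  next
    case False
    then have "q k x = 0" "g x = 0" for k
      by (auto simp: q_def g_def)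
    then show ?thesis by simp
  qed
  moreover have "q k \<in> borel_measurable lborel" for k
    unfolding q_def by measurable
  ultimately have [measurable]: "g \<in> borel_measurable lborel"
    by (rule borel_measurable_LIMSEQ_real)
  have "(\<lambda>x. indicator {a..b} x *\<^sub>R f' x) = (\<lambda>x. g x + indicator ({a..b} \<inter> {b}) x * f' b)"
    by (rule ext) (auto simp: g_def indicator_def)
  then show ?thesis
    unfolding set_borel_measurable_def by simp
qed

locale phi_substitution =
  fixes m n :: real and \<Phi> \<Phi>' :: "real \<Rightarrow> real"
  assumes m_less_n: "m < n" and mono_Phi: "mono_on {m..n} \<Phi>"
    and Phi_deriv: "\<And>l. l \<in> {m..n} \<Longrightarrow> (\<Phi> has_real_derivative \<Phi>' l) (at l within {m..n})"
    and Phi'_nonzero: "\<And>l. l \<in> {m..n} \<Longrightarrow> \<Phi>' l \<noteq> 0"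
begin

lemma continuous_on_Phi: "continuous_on {m..n} \<Phi>"
  using Phi_deriv DERIV_continuous continuous_on_eq_continuous_within by blast

lemma Phi_le: "x \<in> {m..n} \<Longrightarrow> y \<in> {m..n} \<Longrightarrow> x \<le> y \<Longrightarrow> \<Phi> x \<le> \<Phi> y"
  using mono_Phi by (simp add: mono_on_def)

lemma Phi'_pos:
  assumes l: "l \<in> {m..n}"
  shows "0 < \<Phi>' l"
proof -
  have "0 \<le> \<Phi>' l"
  proof (rule tendsto_lowerbound)
    show "((\<lambda>y. (\<Phi> y - \<Phi> l) / (y - l)) \<longlongrightarrow> \<Phi>' l) (at l within {m..n})"
      using Phi_deriv[OF l] by (simp add: has_field_derivative_iff)
    show "\<forall>\<^sub>F y in at l within {m..n}. 0 \<le> (\<Phi> y - \<Phi> l) / (y - l)"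
      unfolding eventually_at_filter
    proof (intro always_eventually allI impI)
      fix y assume y: "y \<noteq> l" "y \<in> {m..n}"
      show "0 \<le> (\<Phi> y - \<Phi> l) / (y - l)"
      proof (cases "y < l")
        case True
        then show ?thesis using Phi_le[OF y(2) l] by (simp add: divide_nonpos_neg)
      next
        case False
        then show ?thesis using Phi_le[OF l y(2)] y(1) by simp
      qed
    qed
    show "at l within {m..n} \<noteq> bot"
      using m_less_n l by (simp add: trivial_limit_within islimpt_Icc)
  qed
  then show ?thesis
    using Phi'_nonzero[OF l] by simp
qed

lemma Phi_less:
  assumes x: "x \<in> {m..n}" and y: "y \<in> {m..n}" and "x < y"
  shows "\<Phi> x < \<Phi> y"
proof (rule ccontr)
  assume "\<not> \<Phi> x < \<Phi> y"
  have flat: "\<Phi> z = \<Phi> x" if "z \<in> {x..y}" for z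
  proof -
    have z: "z \<in> {m..n}" using that x y by auto
    have "\<Phi> x \<le> \<Phi> z" "\<Phi> z \<le> \<Phi> y"
      using Phi_le[OF x z] Phi_le[OF z y] that by auto
    then show ?thesis using \<open>\<not> \<Phi> x < \<Phi> y\<close> by linarith
  qed
  have "(\<Phi> has_vector_derivative \<Phi>' x) (at x within {x..y})"
    using has_field_derivative_subset[OF Phi_deriv[OF x], of "{x..y}"] x y
    unfolding has_real_derivative_iff_has_vector_derivative by auto
  then have "((\<lambda>_. \<Phi> x) has_vector_derivative \<Phi>' x) (at x within {x..y})"
    by (rule has_vector_derivative_transform_within[OF _ zero_less_one]) (use \<open>x < y\<close> in \<open>auto intro!: flat\<close>)
  moreover have x_in: "x \<in> {x..y}" using \<open>x < y\<close> by simp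
  ultimately have "vector_derivative (\<lambda>_. \<Phi> x) (at x within {x..y}) = \<Phi>' x"
    using vector_derivative_within_closed_interval[OF \<open>x < y\<close>] by blast
  moreover have "vector_derivative (\<lambda>_. \<Phi> x) (at x within {x..y}) = 0"
    by (rule vector_derivative_within_closed_interval[OF \<open>x < y\<close> x_in has_vector_derivative_const])
  ultimately have "\<Phi>' x = 0" by simp
  then show False
    using Phi'_nonzero[OF x] by simp
qed

lemma inj_on_Phi: "inj_on \<Phi> {m..n}"
proof (rule inj_onI)
  fix x y assume "x \<in> {m..n}" "y \<in> {m..n}" "\<Phi> x = \<Phi> y"
  then show "x = y"
    using Phi_less[of x y] Phi_less[of y x] by (cases x y rule: linorder_cases) auto
qed

lemma Phi_image:
  assumes "t \<in> {m..n}"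
  shows "\<Phi> ` {m..t} = {\<Phi> m..\<Phi> t}"
proof
  show "\<Phi> ` {m..t} \<subseteq> {\<Phi> m..\<Phi> t}"
    using assms by (auto intro!: Phi_le)
  show "{\<Phi> m..\<Phi> t} \<subseteq> \<Phi> ` {m..t}"
  proof
    fix v assume v: "v \<in> {\<Phi> m..\<Phi> t}"
    have "continuous_on {m..t} \<Phi>"
      using assms by (intro continuous_on_subset[OF continuous_on_Phi]) auto
    then obtain x where "m \<le> x" "x \<le> t" "\<Phi> x = v"
      using IVT'[of \<Phi> m v t] v assms by auto
    then show "v \<in> \<Phi> ` {m..t}" by auto
  qed
qed

definition Phi_inv :: "real \<Rightarrow> real" where
  "Phi_inv = the_inv_into {m..n} \<Phi>"

lemma Phi_inv_Phi: "x \<in> {m..n} \<Longrightarrow> Phi_inv (\<Phi> x) = x"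
  unfolding Phi_inv_def by (rule the_inv_into_f_f[OF inj_on_Phi])

lemma Phi_image_all: "\<Phi> ` {m..n} = {\<Phi> m..\<Phi> n}"
  using Phi_image[of n] m_less_n by simp

lemma Phi_Phi_inv:
  assumes "u \<in> {\<Phi> m..\<Phi> n}"
  shows "\<Phi> (Phi_inv u) = u" and "Phi_inv u \<in> {m..n}"
  using f_the_inv_into_f[OF inj_on_Phi] the_inv_into_into[OF inj_on_Phi _ subset_refl] assms
  unfolding Phi_inv_def Phi_image_all[symmetric] by auto

lemma continuous_on_Phi_inv: "continuous_on {\<Phi> m..\<Phi> n} Phi_inv"
  using continuous_on_inv_into[OF continuous_on_Phi compact_Icc inj_on_Phi]
  unfolding Phi_inv_def Phi_image_all .

lemma Phi_in: "t \<in> {m..n} \<Longrightarrow> \<Phi> t \<in> {\<Phi> m..\<Phi> n}"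
  using Phi_le m_less_n by auto

lemma continuous_on_comp_Phi_inv:
  "continuous_on {m..n} z \<Longrightarrow> continuous_on {\<Phi> m..\<Phi> n} (\<lambda>u. z (Phi_inv u))"
  by (rule continuous_on_compose2[OF _ continuous_on_Phi_inv image_subsetI[OF Phi_Phi_inv(2)]])

lemma set_borel_measurable_Phi_substitution:
  fixes g :: "real \<Rightarrow> real"
  assumes t: "t \<in> {m..n}" and g: "set_borel_measurable lborel {\<Phi> m..\<Phi> t} g"
  shows "set_borel_measurable lborel {m..t} (\<lambda>x. \<Phi>' x * g (\<Phi> x))"
proof -
  have sub: "{m..t} \<subseteq> {m..n}" using t by auto
  have "continuous_on UNIV (\<lambda>x. \<Phi> (clamp m t x))"
    using clamp_continuous_on[of m t \<Phi>] continuous_on_subset[OF continuous_on_Phi sub] by simp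
  then have "(\<lambda>x. \<Phi> (clamp m t x)) \<in> borel_measurable lborel"
    using borel_measurable_continuous_onI by simp
  moreover have "(\<lambda>u. indicator {\<Phi> m..\<Phi> t} u *\<^sub>R g u) \<in> borel_measurable borel"
    using g by (simp add: set_borel_measurable_def)
  ultimately have "(\<lambda>x. indicator {\<Phi> m..\<Phi> t} (\<Phi> (clamp m t x)) *\<^sub>R g (\<Phi> (clamp m t x))) \<in> borel_measurable lborel"
    by (rule measurable_compose)
  moreover have "(\<lambda>x. indicator {m..t} x *\<^sub>R \<Phi>' x) \<in> borel_measurable lborel"
    using set_borel_measurable_derivative[of m t \<Phi> \<Phi>'] has_field_derivative_subset[OF Phi_deriv sub] sub
    unfolding set_borel_measurable_def by blast
  ultimately have "(\<lambda>x. (indicator {m..t} x *\<^sub>R \<Phi>' x) * (indicator {\<Phi> m..\<Phi> t} (\<Phi> (clamp m t x)) *\<^sub>R g (\<Phi> (clamp m t x))))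
      \<in> borel_measurable lborel"
    by measurable
  moreover have "(\<lambda>x. indicator {m..t} x *\<^sub>R (\<Phi>' x * g (\<Phi> x)))
      = (\<lambda>x. (indicator {m..t} x *\<^sub>R \<Phi>' x) * (indicator {\<Phi> m..\<Phi> t} (\<Phi> (clamp m t x)) *\<^sub>R g (\<Phi> (clamp m t x))))"
    using Phi_le t by (auto simp: indicator_def)
  ultimately show ?thesis
    unfolding set_borel_measurable_def by simp
qed

text \<open>The change of variables of the library is stated for Lebesgue integrability; Borel
  measurability transfers it to \<open>lborel\<close>, on which \<open>LINT\<close> vanishes for non-measurable functions.\<close>
lemma set_integral_Phi_substitution:
  fixes g :: "real \<Rightarrow> real"
  assumes t: "t \<in> {m..n}" and g: "set_integrable lborel {\<Phi> m..\<Phi> t} g"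
  shows "set_integrable lborel {m..t} (\<lambda>\<eta>. \<Phi>' \<eta> * g (\<Phi> \<eta>))"
    and "(LINT \<eta>:{m..t}|lborel. \<Phi>' \<eta> * g (\<Phi> \<eta>)) = (LINT u:{\<Phi> m..\<Phi> t}|lborel. g u)"
proof -
  have sub: "{m..t} \<subseteq> {m..n}" using t by auto
  have deriv: "(\<Phi> has_real_derivative \<Phi>' x) (at x within {m..t})" if "x \<in> {m..t}" for x
    using has_field_derivative_subset[OF Phi_deriv sub] that sub by blast
  have g_measurable: "set_borel_measurable lborel {\<Phi> m..\<Phi> t} g"
    using g unfolding set_integrable_def set_borel_measurable_def by (rule borel_measurable_integrable)
  have "g absolutely_integrable_on \<Phi> ` {m..t}" "integral (\<Phi> ` {m..t}) g = (LINT u:{\<Phi> m..\<Phi> t}|lborel. g u)"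
    using set_integrable_lborel_iff_absolutely_integrable[OF g_measurable] g set_borel_integral_eq_integral(2)[OF g]
    unfolding Phi_image[OF t] by simp_all
  then have substitution: "(\<lambda>x. \<bar>\<Phi>' x\<bar> * g (\<Phi> x)) absolutely_integrable_on {m..t}
      \<and> integral {m..t} (\<lambda>x. \<bar>\<Phi>' x\<bar> * g (\<Phi> x)) = (LINT u:{\<Phi> m..\<Phi> t}|lborel. g u)"
    using has_absolute_integral_change_of_variables_1'[of "{m..t}" \<Phi> \<Phi>' g] deriv inj_on_subset[OF inj_on_Phi sub]
    by simp
  have abs_eq: "\<bar>\<Phi>' x\<bar> * g (\<Phi> x) = \<Phi>' x * g (\<Phi> x)" if "x \<in> {m..t}" for x
    using Phi'_pos[of x] that sub by auto
  have "set_integrable lebesgue {m..t} (\<lambda>x. \<bar>\<Phi>' x\<bar> * g (\<Phi> x))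
      = set_integrable lebesgue {m..t} (\<lambda>x. \<Phi>' x * g (\<Phi> x))"
    by (rule set_integrable_cong) (simp_all add: abs_eq)
  then have "(\<lambda>x. \<Phi>' x * g (\<Phi> x)) absolutely_integrable_on {m..t}"
    using substitution by simp
  then show integrable: "set_integrable lborel {m..t} (\<lambda>\<eta>. \<Phi>' \<eta> * g (\<Phi> \<eta>))"
    using set_integrable_lborel_iff_absolutely_integrable[OF set_borel_measurable_Phi_substitution[OF t g_measurable]]
    by simp
  have "integral {m..t} (\<lambda>x. \<bar>\<Phi>' x\<bar> * g (\<Phi> x)) = integral {m..t} (\<lambda>x. \<Phi>' x * g (\<Phi> x))"
    by (rule integral_cong) (rule abs_eq)
  then show "(LINT \<eta>:{m..t}|lborel. \<Phi>' \<eta> * g (\<Phi> \<eta>)) = (LINT u:{\<Phi> m..\<Phi> t}|lborel. g u)"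
    using substitution set_borel_integral_eq_integral(2)[OF integrable] by simp
qed

lemma RL_int_eq_rl_integral:
  fixes w :: "real \<Rightarrow> real"
  assumes "0 < \<gamma>" "continuous_on {m..n} w" "t \<in> {m..n}"
  shows "RL_int m \<Phi> \<Phi>' \<gamma> w t = rl_integral (\<Phi> m) \<gamma> (\<lambda>u. w (Phi_inv u)) (\<Phi> t)"
proof -
  define g where "g u = (\<Phi> t - u) powr (\<gamma> - 1) * w (Phi_inv u)" for u
  have "continuous_on {\<Phi> m..\<Phi> t} (\<lambda>u. w (Phi_inv u))"
    using assms(3) Phi_le[of t n] by (intro continuous_on_subset[OF continuous_on_comp_Phi_inv[OF assms(2)]]) auto
  then have "set_integrable lborel {\<Phi> m..\<Phi> t} g"
    unfolding g_def by (rule set_integrable_rl_kernel_times[OF assms(1)])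
  then have "(LINT \<eta>:{m..t}|lborel. \<Phi>' \<eta> * g (\<Phi> \<eta>)) = (LINT u:{\<Phi> m..\<Phi> t}|lborel. g u)"
    by (rule set_integral_Phi_substitution(2)[OF assms(3)])
  moreover have "(LINT \<eta>:{m..t}|lborel. \<Phi>' \<eta> * (\<Phi> t - \<Phi> \<eta>) powr (\<gamma> - 1) * w \<eta>)
      = (LINT \<eta>:{m..t}|lborel. \<Phi>' \<eta> * g (\<Phi> \<eta>))"
    using assms(3) by (intro set_lebesgue_integral_cong) (auto simp: g_def Phi_inv_Phi)
  ultimately show ?thesis
    unfolding RL_int_def rl_integral_def g_def by simp
qed

lemma has_vector_derivative_rl_integral_one_Phi:
  assumes "continuous_on {\<Phi> m..\<Phi> n} g" "l \<in> {m..n}"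
  shows "((\<lambda>t. rl_integral (\<Phi> m) 1 g (\<Phi> t)) has_vector_derivative \<Phi>' l * g (\<Phi> l)) (at l within {m..n})"
proof -
  have outer: "(rl_integral (\<Phi> m) 1 g has_vector_derivative g (\<Phi> l)) (at (\<Phi> l) within \<Phi> ` {m..n})"
    using has_vector_derivative_rl_integral_one[OF assms(1) Phi_in[OF assms(2)]] unfolding Phi_image_all .
  have inner: "(\<Phi> has_vector_derivative \<Phi>' l) (at l within {m..n})"
    using Phi_deriv[OF assms(2)] by (simp add: has_real_derivative_iff_has_vector_derivative)
  show ?thesis
    using vector_diff_chain_within[OF inner outer] by (simp add: o_def)
qed

section \<open>The \<open>\<Phi>\<close>-Caputo problem\<close>

text \<open>For \<open>\<gamma> = 1\<close> the Caputo derivative of the problem differentiates \<open>z\<close> itself rather than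
  \<open>z - z m\<close>, hence the constant.\<close>
lemma caputo_function_eq:
  assumes "0 < \<gamma>" "\<gamma> \<le> 1" "continuous_on {m..n} z" "t \<in> {m..n}"
  shows "(if \<gamma> = 1 then z t else RL_int m \<Phi> \<Phi>' (1 - \<gamma>) (\<lambda>\<eta>. z \<eta> - z m) t)
       = (if \<gamma> = 1 then z m else 0) + caputo_primitive (\<Phi> m) \<gamma> (\<lambda>u. z (Phi_inv u) - z m) (\<Phi> t)"
proof (cases "\<gamma> = 1")
  case False
  have "continuous_on {m..n} (\<lambda>\<eta>. z \<eta> - z m)"
    by (intro continuous_intros assms(3))
  then show ?thesis
    using False RL_int_eq_rl_integral[of "1 - \<gamma>" "\<lambda>\<eta>. z \<eta> - z m" t] assms
    by (simp add: caputo_primitive_def)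
qed (simp add: caputo_primitive_def Phi_inv_Phi[OF assms(4)])

lemma caputo_eq_iff_has_vector_derivative:
  assumes "0 < \<gamma>" "\<gamma> \<le> 1" "continuous_on {m..n} z" "l \<in> {m..n}"
  shows "caputo_exists m n \<Phi> \<Phi>' \<gamma> z l \<and> caputo m n \<Phi> \<Phi>' \<gamma> z l = v \<longleftrightarrow>
    ((\<lambda>t. caputo_primitive (\<Phi> m) \<gamma> (\<lambda>u. z (Phi_inv u) - z m) (\<Phi> t)) has_vector_derivative \<Phi>' l * v)
      (at l within {m..n})"
    (is "_ \<longleftrightarrow> (?P has_vector_derivative _) _")
proof -
  define F where "F = (if \<gamma> = 1 then z else (\<lambda>t. RL_int m \<Phi> \<Phi>' (1 - \<gamma>) (\<lambda>\<eta>. z \<eta> - z m) t))"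
  define c where "c = (if \<gamma> = 1 then z m else 0)"
  have F_eq: "F t = c + ?P t" if "t \<in> {m..n}" for t
    using caputo_function_eq[OF assms(1-3) that] by (cases "\<gamma> = 1") (simp_all add: F_def c_def)
  have F_iff: "(F has_vector_derivative D) (at l within {m..n}) \<longleftrightarrow> (?P has_vector_derivative D) (at l within {m..n})"
    for D
  proof
    assume "(F has_vector_derivative D) (at l within {m..n})"
    from has_vector_derivative_diff[OF this has_vector_derivative_const]
    have "((\<lambda>t. F t - c) has_vector_derivative D) (at l within {m..n})"
      by simp
    then show "(?P has_vector_derivative D) (at l within {m..n})"
      by (rule has_vector_derivative_transform_within[OF _ zero_less_one assms(4)]) (simp add: F_eq)
  next
    assume "(?P has_vector_derivative D) (at l within {m..n})"
    from has_vector_derivative_add[OF has_vector_derivative_const this]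
    have "((\<lambda>t. c + ?P t) has_vector_derivative D) (at l within {m..n})"
      by simp
    then show "(F has_vector_derivative D) (at l within {m..n})"
      by (rule has_vector_derivative_transform_within[OF _ zero_less_one assms(4)]) (simp add: F_eq)
  qed
  have exists: "caputo_exists m n \<Phi> \<Phi>' \<gamma> z l \<longleftrightarrow> F differentiable (at l within {m..n})"
    and caputo_value: "caputo m n \<Phi> \<Phi>' \<gamma> z l = vector_derivative F (at l within {m..n}) / \<Phi>' l"
    by (simp_all add: caputo_exists_def caputo_def F_def)
  have nonzero: "\<Phi>' l \<noteq> 0" by (rule Phi'_nonzero[OF assms(4)])
  show ?thesis
  proof
    assume caputo: "caputo_exists m n \<Phi> \<Phi>' \<gamma> z l \<and> caputo m n \<Phi> \<Phi>' \<gamma> z l = v"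
    then have "(F has_vector_derivative vector_derivative F (at l within {m..n})) (at l within {m..n})"
      using exists vector_derivative_works by blast
    moreover have "vector_derivative F (at l within {m..n}) = \<Phi>' l * v"
      using caputo caputo_value nonzero by (simp add: field_simps)
    ultimately show "(?P has_vector_derivative \<Phi>' l * v) (at l within {m..n})"
      using F_iff by simp
  next
    assume "(?P has_vector_derivative \<Phi>' l * v) (at l within {m..n})"
    then have F': "(F has_vector_derivative \<Phi>' l * v) (at l within {m..n})"
      using F_iff by simp
    then have "F differentiable (at l within {m..n})"
      by (rule differentiableI_vector)
    moreover have "vector_derivative F (at l within {m..n}) = \<Phi>' l * v"
      by (rule vector_derivative_within_closed_interval[OF m_less_n assms(4) F'])
    ultimately show "caputo_exists m n \<Phi> \<Phi>' \<gamma> z l \<and> caputo m n \<Phi> \<Phi>' \<gamma> z l = v"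
      using exists caputo_value nonzero by simp
  qed
qed

lemma caputo_eq_of_caputo_primitive:
  assumes "0 < \<gamma>" "\<gamma> \<le> 1" "continuous_on {m..n} z" "continuous_on {\<Phi> m..\<Phi> n} g" "l \<in> {m..n}"
    and primitive: "\<And>u. u \<in> {\<Phi> m..\<Phi> n} \<Longrightarrow>
      caputo_primitive (\<Phi> m) \<gamma> (\<lambda>u. z (Phi_inv u) - z m) u = rl_integral (\<Phi> m) 1 g u"
  shows "caputo_exists m n \<Phi> \<Phi>' \<gamma> z l \<and> caputo m n \<Phi> \<Phi>' \<gamma> z l = g (\<Phi> l)"
  unfolding caputo_eq_iff_has_vector_derivative[OF assms(1-3,5)]
  by (rule has_vector_derivative_transform_within[OF has_vector_derivative_rl_integral_one_Phi[OF assms(4,5)]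
        zero_less_one assms(5)]) (simp add: primitive[OF Phi_in])

lemma is_solutionI:
  fixes z Y F G :: "real \<Rightarrow> real"
  assumes orders: "0 < \<kappa>" "\<kappa> < \<mu>" "\<mu> \<le> 1" and "0 < \<sigma>"
    and \<alpha>: "continuous_on {m - \<sigma>..m} \<alpha>"
    and initial: "\<And>l. l \<in> {m - \<sigma>..m} \<Longrightarrow> z l = \<alpha> l"
    and z_Y: "\<And>l. l \<in> {m..n} \<Longrightarrow> z l = \<alpha> m + Y (\<Phi> l)"
    and Y: "continuous_on {\<Phi> m..\<Phi> n} Y"
    and F: "continuous_on {\<Phi> m..\<Phi> n} F" and G: "continuous_on {\<Phi> m..\<Phi> n} G"
    and primitive_\<mu>: "\<And>u. u \<in> {\<Phi> m..\<Phi> n} \<Longrightarrow> caputo_primitive (\<Phi> m) \<mu> Y u = rl_integral (\<Phi> m) 1 F u"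
    and primitive_\<kappa>: "\<And>u. u \<in> {\<Phi> m..\<Phi> n} \<Longrightarrow> caputo_primitive (\<Phi> m) \<kappa> Y u = rl_integral (\<Phi> m) 1 G u"
    and equation: "\<And>l. l \<in> {m..n} \<Longrightarrow> F (\<Phi> l) + \<rho> * G (\<Phi> l) = h l"
  shows "is_solution m n \<sigma> \<Phi> \<Phi>' \<kappa> \<mu> \<rho> h \<alpha> z"
proof -
  have z_m: "z m = \<alpha> m"
    using initial \<open>0 < \<sigma>\<close> by simp
  have "continuous_on {m..n} (\<lambda>l. \<alpha> m + Y (\<Phi> l))"
    by (intro continuous_intros continuous_on_compose2[OF Y continuous_on_Phi]) (auto intro: Phi_in)
  then have z: "continuous_on {m..n} z"
    by (rule continuous_on_eq) (simp add: z_Y)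
  have primitive_z: "caputo_primitive (\<Phi> m) \<gamma> (\<lambda>u. z (Phi_inv u) - z m) u = caputo_primitive (\<Phi> m) \<gamma> Y u"
    if "u \<in> {\<Phi> m..\<Phi> n}" for \<gamma> u
    using that z_m z_Y[OF Phi_Phi_inv(2)] Phi_Phi_inv(1) by (intro caputo_primitive_cong) auto
  have caputo_\<mu>: "caputo_exists m n \<Phi> \<Phi>' \<mu> z l \<and> caputo m n \<Phi> \<Phi>' \<mu> z l = F (\<Phi> l)"
    if "l \<in> {m..n}" for l
    using orders by (intro caputo_eq_of_caputo_primitive[OF _ _ z F that]) (auto simp: primitive_z primitive_\<mu>)
  have caputo_\<kappa>: "caputo_exists m n \<Phi> \<Phi>' \<kappa> z l \<and> caputo m n \<Phi> \<Phi>' \<kappa> z l = G (\<Phi> l)"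
    if "l \<in> {m..n}" for l
    using orders by (intro caputo_eq_of_caputo_primitive[OF _ _ z G that]) (auto simp: primitive_z primitive_\<kappa>)
  have "continuous_on {m - \<sigma>..m} z"
    using \<alpha> by (rule continuous_on_eq) (simp add: initial)
  then have "continuous_on ({m - \<sigma>..m} \<union> {m..n}) z"
    using z by (intro continuous_on_closed_Un) auto
  moreover have "{m - \<sigma>..m} \<union> {m..n} = {m - \<sigma>..n}"
    using \<open>0 < \<sigma>\<close> m_less_n by auto
  ultimately show ?thesis
    unfolding is_solution_def using initial caputo_\<mu> caputo_\<kappa> equation by simp
qed

lemma caputo_primitives_of_solution:
  fixes z :: "real \<Rightarrow> real"
  assumes solution: "is_solution m n \<sigma> \<Phi> \<Phi>' \<kappa> \<mu> \<rho> h \<alpha> z"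
    and orders: "0 < \<kappa>" "\<kappa> < \<mu>" "\<mu> \<le> 1" and "0 < \<sigma>" and h: "continuous_on {m..n} h"
    and u: "u \<in> {\<Phi> m..\<Phi> n}"
  shows "caputo_primitive (\<Phi> m) \<mu> (\<lambda>u. z (Phi_inv u) - z m) u + \<rho> * caputo_primitive (\<Phi> m) \<kappa> (\<lambda>u. z (Phi_inv u) - z m) u
       = rl_integral (\<Phi> m) 1 (\<lambda>u. h (Phi_inv u)) u"
proof -
  define P where "P \<gamma> t = caputo_primitive (\<Phi> m) \<gamma> (\<lambda>u. z (Phi_inv u) - z m) (\<Phi> t)" for \<gamma> t
  define B where "B t = P \<mu> t + \<rho> * P \<kappa> t - rl_integral (\<Phi> m) 1 (\<lambda>u. h (Phi_inv u)) (\<Phi> t)" for t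
  have z: "continuous_on {m..n} z"
    using solution \<open>0 < \<sigma>\<close> unfolding is_solution_def by (auto elim: continuous_on_subset)
  have "(B has_field_derivative 0) (at l within {m..n})" if l: "l \<in> {m..n}" for l
  proof -
    have "(P \<gamma> has_vector_derivative \<Phi>' l * caputo m n \<Phi> \<Phi>' \<gamma> z l) (at l within {m..n})"
      if "\<gamma> \<in> {\<mu>, \<kappa>}" for \<gamma>
      using that solution orders l unfolding P_def is_solution_def
      by (auto simp: caputo_eq_iff_has_vector_derivative[OF _ _ z l, symmetric])
    from this[of \<mu>] this[of \<kappa>] has_vector_derivative_rl_integral_one_Phi[OF continuous_on_comp_Phi_inv[OF h] l]
    have "(B has_vector_derivative \<Phi>' l * (caputo m n \<Phi> \<Phi>' \<mu> z l + \<rho> * caputo m n \<Phi> \<Phi>' \<kappa> z l - h l))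
        (at l within {m..n})"
      unfolding B_def using Phi_inv_Phi[OF l]
      by (auto intro!: derivative_eq_intros simp: algebra_simps)
    then show ?thesis
      using solution l unfolding is_solution_def by (simp add: has_real_derivative_iff_has_vector_derivative)
  qed
  then obtain c where c: "\<And>t. t \<in> {m..n} \<Longrightarrow> B t = c"
    using has_field_derivative_zero_constant[of "{m..n}" B] by auto
  have "B m = 0"
    using m_less_n by (simp add: B_def P_def caputo_primitive_def Phi_inv_Phi)
  then have "B (Phi_inv u) = 0"
    using c[OF Phi_Phi_inv(2)[OF u]] c[of m] m_less_n u by simp
  then show ?thesis
    using Phi_Phi_inv(1)[OF u] by (simp add: B_def P_def)
qed

lemma is_solution_unique:
  fixes z Y :: "real \<Rightarrow> real"
  assumes solution: "is_solution m n \<sigma> \<Phi> \<Phi>' \<kappa> \<mu> \<rho> h \<alpha> z"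
    and orders: "0 < \<kappa>" "\<kappa> < \<mu>" "\<mu> \<le> 1" and "0 < \<sigma>" and h: "continuous_on {m..n} h"
    and Y: "continuous_on {\<Phi> m..\<Phi> n} Y"
    and primitives: "\<And>u. u \<in> {\<Phi> m..\<Phi> n} \<Longrightarrow>
      caputo_primitive (\<Phi> m) \<mu> Y u + \<rho> * caputo_primitive (\<Phi> m) \<kappa> Y u = rl_integral (\<Phi> m) 1 (\<lambda>u. h (Phi_inv u)) u"
    and l: "l \<in> {m..n}"
  shows "z l = z m + Y (\<Phi> l)"
proof -
  have z: "continuous_on {m..n} z"
    using solution \<open>0 < \<sigma>\<close> unfolding is_solution_def by (auto elim: continuous_on_subset)
  have "z (Phi_inv u) - z m = Y u" if "u \<in> {\<Phi> m..\<Phi> n}" for u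
  proof (rule caputo_two_term_unique[OF _ _ Y orders _ that])
    show "\<Phi> m < \<Phi> n"
      using Phi_less m_less_n by simp
    show "continuous_on {\<Phi> m..\<Phi> n} (\<lambda>u. z (Phi_inv u) - z m)"
      by (intro continuous_intros continuous_on_comp_Phi_inv z)
    show "caputo_primitive (\<Phi> m) \<mu> (\<lambda>u. z (Phi_inv u) - z m) v + \<rho> * caputo_primitive (\<Phi> m) \<kappa> (\<lambda>u. z (Phi_inv u) - z m) v
        = caputo_primitive (\<Phi> m) \<mu> Y v + \<rho> * caputo_primitive (\<Phi> m) \<kappa> Y v" if "v \<in> {\<Phi> m..\<Phi> n}" for v
      using caputo_primitives_of_solution[OF solution orders \<open>0 < \<sigma>\<close> h that] primitives[OF that] by simp
  qed
  from this[OF Phi_in[OF l]] show ?thesis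
    using Phi_inv_Phi[OF l] by simp
qed

lemma set_integral_ml_kernel_Phi:
  assumes "continuous_on {m..n} h" "0 < \<delta>" "0 < c" "l \<in> {m..n}"
  shows "(LINT \<eta>:{m..l}|lborel. \<Phi>' \<eta> * (\<Phi> l - \<Phi> \<eta>) powr (c - 1) * ML2 \<delta> c (- \<rho> * (\<Phi> l - \<Phi> \<eta>) powr \<delta>) * h \<eta>)
       = rl_neumann_series.ml_series (\<Phi> m) \<delta> \<rho> (\<lambda>u. h (Phi_inv u)) c (\<Phi> l)"
proof -
  interpret rl_neumann_series "\<Phi> m" "\<Phi> n" \<delta> \<rho> "\<lambda>u. h (Phi_inv u)"
    using assms(1,2) continuous_on_comp_Phi_inv by unfold_locales auto
  define K where "K u = (\<Phi> l - u) powr (c - 1) * ML2 \<delta> c (- \<rho> * (\<Phi> l - u) powr \<delta>) * h (Phi_inv u)" for u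
  have "(LINT \<eta>:{m..l}|lborel. \<Phi>' \<eta> * (\<Phi> l - \<Phi> \<eta>) powr (c - 1) * ML2 \<delta> c (- \<rho> * (\<Phi> l - \<Phi> \<eta>) powr \<delta>) * h \<eta>)
      = (LINT \<eta>:{m..l}|lborel. \<Phi>' \<eta> * K (\<Phi> \<eta>))"
    using assms(4) by (intro set_lebesgue_integral_cong) (auto simp: K_def Phi_inv_Phi)
  also have "\<dots> = (LINT u:{\<Phi> m..\<Phi> l}|lborel. K u)"
    using set_integral_ml_kernel(1)[OF assms(3) Phi_in[OF assms(4)]] unfolding K_def
    by (rule set_integral_Phi_substitution(2)[OF assms(4)])
  also have "\<dots> = ml_series c (\<Phi> l)"
    unfolding K_def by (rule set_integral_ml_kernel(2)[OF assms(3) Phi_in[OF assms(4)]])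
  finally show ?thesis .
qed

end

theorem mainTheorem1:
  fixes m n \<sigma> \<kappa> \<mu> \<rho> :: real
    and \<Phi> \<Phi>' h \<alpha> :: "real \<Rightarrow> real"
  assumes "0 < m" and "m < n" and "0 < \<sigma>"
    and "mono_on {m..n} \<Phi>"
    and "\<And>l. l \<in> {m..n} \<Longrightarrow> (\<Phi> has_real_derivative \<Phi>' l) (at l within {m..n})"
    and "\<And>l. l \<in> {m..n} \<Longrightarrow> \<Phi>' l \<noteq> 0"
    and "0 < \<kappa>" and "\<kappa> < \<mu>" and "\<mu> \<le> 1" and "0 < \<rho>"
    and "continuous_on {m..n} h"
    and "continuous_on {m - \<sigma>..m} \<alpha>"
  shows "is_solution m n \<sigma> \<Phi> \<Phi>' \<kappa> \<mu> \<rho> h \<alpha>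
           (\<lambda>l. if l \<le> m then \<alpha> l
                 else \<alpha> m + (LINT \<eta>:{m..l}|lborel.
                     \<Phi>' \<eta> * (\<Phi> l - \<Phi> \<eta>) powr (\<mu> - 1)
                       * ML2 (\<mu> - \<kappa>) \<mu> (- \<rho> * (\<Phi> l - \<Phi> \<eta>) powr (\<mu> - \<kappa>)) * h \<eta>))
       \<and> (\<forall>z. is_solution m n \<sigma> \<Phi> \<Phi>' \<kappa> \<mu> \<rho> h \<alpha> z \<longrightarrow>
             (\<forall>l\<in>{m - \<sigma>..n}. z l = (if l \<le> m then \<alpha> l
                 else \<alpha> m + (LINT \<eta>:{m..l}|lborel.
                     \<Phi>' \<eta> * (\<Phi> l - \<Phi> \<eta>) powr (\<mu> - 1)
                       * ML2 (\<mu> - \<kappa>) \<mu> (- \<rho> * (\<Phi> l - \<Phi> \<eta>) powr (\<mu> - \<kappa>)) * h \<eta>))))"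
    (is "is_solution _ _ _ _ _ _ _ _ _ _ ?z \<and> ?unique")
proof -
  interpret phi_substitution m n \<Phi> \<Phi>'
    using assms(2,4-6) by unfold_locales
  define H where "H = (\<lambda>u. h (Phi_inv u))"
  interpret rl_neumann_series "\<Phi> m" "\<Phi> n" "\<mu> - \<kappa>" \<rho> H
    using assms(8,11) continuous_on_comp_Phi_inv unfolding H_def by unfold_locales auto
  have explicit: "?z l = \<alpha> m + ml_series \<mu> (\<Phi> l)" if "l \<in> {m..n}" for l
    using that set_integral_ml_kernel_Phi[OF assms(11), of "\<mu> - \<kappa>" \<mu> l \<rho>] assms(7,8) ml_series_base
    by (cases "l = m") (auto simp: H_def)
  have Z: "continuous_on {\<Phi> m..\<Phi> n} (ml_series \<mu>)"
    using assms(7,8) by (intro continuous_on_ml_series) auto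
  have "is_solution m n \<sigma> \<Phi> \<Phi>' \<kappa> \<mu> \<rho> h \<alpha> ?z"
    using assms(3,7-9,12) explicit Z continuous_on_ml_series[OF \<delta>_pos] continuous_H caputo_primitives_ml_series
    by (intro is_solutionI[where Y = "ml_series \<mu>" and F = "\<lambda>s. H s - \<rho> * ml_series (\<mu> - \<kappa>) s"
          and G = "ml_series (\<mu> - \<kappa>)"]) (auto intro!: continuous_intros simp: H_def Phi_inv_Phi)
  moreover have ?unique
  proof (intro allI impI ballI)
    fix z l assume solution: "is_solution m n \<sigma> \<Phi> \<Phi>' \<kappa> \<mu> \<rho> h \<alpha> z" and l: "l \<in> {m - \<sigma>..n}"
    then have initial: "\<And>l. l \<in> {m - \<sigma>..m} \<Longrightarrow> z l = \<alpha> l"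
      unfolding is_solution_def by blast
    have "z l = z m + ml_series \<mu> (\<Phi> l)" if "l \<in> {m..n}"
      by (rule is_solution_unique[OF solution assms(7-9,3,11) Z _ that])
        (use caputo_two_term_ml_series[OF assms(7,9) refl] in \<open>simp add: H_def\<close>)
    then show "z l = ?z l"
      using l initial[of l] initial[of m] explicit[of l] assms(3) by (cases "l \<le> m") auto
  qed
  ultimately show ?thesis ..
qed

end
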